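(* Let $n\ge2k$, $\lambda\in\Lambda^{\mathbf A_k}_n$ with $|\lambda^*|=m$, and $\kappa\vdash k$ with $\gamma_\kappa\in\mathcal A_k$ (i.e. any $\kappa$ for $\mathbf P_k,\mathbf B_k,\mathbf{RB}_k,\mathbf R_k$; only $\kappa=[1^k]$ for the planar algebras). Then $$\chi^\lambda_{\mathbf A_k}(\gamma_\kappa)=\sum_{\mu\vdash m}\mathsf F^{\mu,\kappa}_{\mathbf A_k}\,\chi^{\lambda^*}_{\mathfrak S_m}(\gamma_\mu),$$ where $\mathsf F^{\mu,\kappa}_{\mathbf A_k}=|\mathcal F^\mu_{\mathcal A_k}(\kappa)|$ and $\mathcal F^\mu_{\mathcal A_k}(\kappa)=\{w\in\mathcal W^m_{\mathcal A_k}:\gamma_\kappa\circ w\circ\gamma_\kappa^T=w,\ \sigma_{\gamma_\kappa,w}\text{ has cycle type }\mu\}$.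
   Context: $\mathcal P_k$: set partitions of $\{1,\dots,k,1',\dots,k'\}$ (blocks), drawn with top row $1..k$, bottom row $1'..k'$; $d_1\circ d_2$ concatenation (stack, identify middle rows, discard the $\ell(d_1,d_2)$ components lying entirely in the middle); $\mathbf P_k(n)$ has basis $\mathcal P_k$ with $d_1d_2=n^{\ell}d_1\circ d_2$; $\mathrm{pn}(d)$ = number of blocks meeting both rows. $\mathbf A_k$ is one of $\mathbf P_k(n),\mathbf R_k$ (blocks with at most one vertex per row), $\mathbf B_k(n)$ (blocks of size 2), $\mathbf{RB}_k(n)$ (size 1 or 2), $\mathbf{TL}_k(n),\mathbf M_k(n),\mathbf{PR}_k$ (planar diagrams of $\mathbf B_k,\mathbf{RB}_k,\mathbf R_k$; planar = drawable without crossings), with diagram basis $\mathcal A_k$. $\lambda^*$ = $\lambda$ minus first part; $\Lambda^{\mathbf A_k}_n$: $\{\lambda\vdash n:|\lambda^*|\le k\}$ for $\mathbf P,\mathbf{RB},\mathbf R$; additionally $|\lambda^*|\equiv k\bmod 2$ for $\mathbf B$; $\{[n-m,m]:m\le k\}$ for $\mathbf M,\mathbf{PR}$; additionally $m\equiv k\bmod 2$ for $\mathbf{TL}$. A permutation $\sigma\in\mathfrak S_r$ is the diagram with blocks $\{\sigma(j),j'\}$. $\gamma_r=(r,r-1,\dots,1)\in\mathfrak S_r$; for $\kappa=[\kappa_1,\dots,\kappa_\ell]$, $\gamma_\kappa=\gamma_{\kappa_1}\otimes\cdots\otimes\gamma_{\kappa_\ell}$, where $\otimes$ places diagrams side by side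 (left to right). $\chi^{\nu}_{\mathfrak S_m}(\gamma_\mu)$ is the irreducible $\mathfrak S_m$-character value on cycle type $\mu$. Symmetric $m$-diagrams: $d^T$ = reflection. A symmetric $m$-diagram is given by a set partition of $\{1..k\}$ with $m$ distinguished blocks; blocks $B\cup B'$ (distinguished) and $B,B'$ otherwise. $\mathcal W^m_{\mathcal A_k}$ = those in $\mathcal A_k$. Propagating blocks ordered by largest element; if $\mathrm{pn}(d\circ w\circ d^T)=m$, $\sigma_{d,w}\in\mathfrak S_m$ sends $i$ to $j$ when the $i$-th propagating block of $w$ is connected to the $j$-th of $d\circ w\circ d^T$. $\mathbf A^\lambda_k=\mathbb C\mathcal W^m_{\mathcal A_k}\otimes\mathfrak S^{\lambda^*}_m$ with $d\cdot(w\otimes v)=n^{\ell(d,w)}(d\circ w\circ d^T)\otimes\sigma_{d,w}v$ if $\mathrm{pn}(d\circ w\circ d^T)=m$, else $0$ ($\ell(d,w)$ = components discarded in $d\circ w$) is the irreducible module indexed by $\lambda$; $\chi^\lambda_{\mathbf A_k}$ is its character. *)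

theory Defs
  imports Complex_Main "HOL-Library.Disjoint_Sets" "HOL-Library.Multiset"
    "HOL-Combinatorics.Permutations"
begin

definition partition_of :: "nat \<Rightarrow> nat list \<Rightarrow> bool" where
  "partition_of n xs \<longleftrightarrow> sum_list xs = n \<and> (\<forall>x\<in>set xs. 0 < x) \<and> sorted_wrt (\<ge>) xs"

text \<open>Vertex (i, False) is the top vertex i, vertex (i, True) is the bottom vertex i'.\<close>

type_synonym vtx = "nat \<times> bool"
type_synonym diagram = "vtx set set"

definition verts :: "nat \<Rightarrow> vtx set" where
  "verts k = {1..k} \<times> UNIV"

definition top_row :: "vtx set" where "top_row = UNIV \<times> {False}"
definition bot_row :: "vtx set" where "bot_row = UNIV \<times> {True}"

text \<open>Stacking a list of diagrams: diagram number l occupies levels l (top) and l+1 (bottom).\<close>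

definition lift :: "nat \<Rightarrow> vtx \<Rightarrow> nat \<times> nat" where
  "lift l v = (fst v, if snd v then Suc l else l)"

definition stack_rel :: "diagram list \<Rightarrow> ((nat \<times> nat) \<times> (nat \<times> nat)) set" where
  "stack_rel ds = {(x, y). \<exists>l<length ds. \<exists>B\<in>ds ! l. x \<in> lift l ` B \<and> y \<in> lift l ` B}"

definition comps :: "diagram list \<Rightarrow> (nat \<times> nat) set set" where
  "comps ds = {(stack_rel ds)\<^sup>+ `` {x} | x. x \<in> Domain (stack_rel ds)}"

definition outer :: "nat \<Rightarrow> (nat \<times> nat) set" where
  "outer L = {p. snd p = 0 \<or> snd p = L}"

definition unembed :: "nat \<Rightarrow> nat \<times> nat \<Rightarrow> vtx" where
  "unembed L p = (fst p, snd p = L)"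

definition embed :: "nat \<Rightarrow> vtx \<Rightarrow> nat \<times> nat" where
  "embed L v = (fst v, if snd v then L else 0)"

definition stack :: "diagram list \<Rightarrow> diagram" where
  "stack ds = {unembed (length ds) ` (C \<inter> outer (length ds)) | C.
                 C \<in> comps ds \<and> C \<inter> outer (length ds) \<noteq> {}}"

definition ell :: "diagram list \<Rightarrow> nat" where
  "ell ds = card {C \<in> comps ds. C \<inter> outer (length ds) = {}}"

definition comp :: "diagram \<Rightarrow> diagram \<Rightarrow> diagram" (infixl "\<circ>\<^sub>d" 65) where
  "d1 \<circ>\<^sub>d d2 = stack [d1, d2]"

definition transp :: "diagram \<Rightarrow> diagram" where
  "transp d = (\<lambda>B. (\<lambda>v. (fst v, \<not> snd v)) ` B) ` d"

definition prop_blocks :: "diagram \<Rightarrow> vtx set set" where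
  "prop_blocks d = {B \<in> d. B \<inter> top_row \<noteq> {} \<and> B \<inter> bot_row \<noteq> {}}"

definition pn :: "diagram \<Rightarrow> nat" where
  "pn d = card (prop_blocks d)"

datatype alg = AP | AR | AB | ARB | ATL | AM | APR

definition pos :: "nat \<Rightarrow> vtx \<Rightarrow> nat" where
  "pos k v = (if snd v then 2 * k + 1 - fst v else fst v)"

text \<open>Planar: the set partition is non-crossing w.r.t. the boundary order 1,...,k,k',...,1'.\<close>
definition planar :: "nat \<Rightarrow> diagram \<Rightarrow> bool" where
  "planar k d \<longleftrightarrow> \<not> (\<exists>B\<in>d. \<exists>C\<in>d. B \<noteq> C \<and> (\<exists>a\<in>B. \<exists>c\<in>B. \<exists>b\<in>C. \<exists>e\<in>C.
       pos k a < pos k b \<and> pos k b < pos k c \<and> pos k c < pos k e))"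

definition rook_blocks :: "diagram \<Rightarrow> bool" where
  "rook_blocks d \<longleftrightarrow> (\<forall>B\<in>d. card (B \<inter> top_row) \<le> 1 \<and> card (B \<inter> bot_row) \<le> 1)"

definition brauer_blocks :: "diagram \<Rightarrow> bool" where
  "brauer_blocks d \<longleftrightarrow> (\<forall>B\<in>d. card B = 2)"

definition rb_blocks :: "diagram \<Rightarrow> bool" where
  "rb_blocks d \<longleftrightarrow> (\<forall>B\<in>d. card B = 1 \<or> card B = 2)"

fun alg_cond :: "alg \<Rightarrow> nat \<Rightarrow> diagram \<Rightarrow> bool" where
  "alg_cond AP k d = True"
| "alg_cond AR k d = rook_blocks d"
| "alg_cond AB k d = brauer_blocks d"
| "alg_cond ARB k d = rb_blocks d"
| "alg_cond ATL k d = (brauer_blocks d \<and> planar k d)"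
| "alg_cond AM k d = (rb_blocks d \<and> planar k d)"
| "alg_cond APR k d = (rook_blocks d \<and> planar k d)"

definition diagrams :: "alg \<Rightarrow> nat \<Rightarrow> diagram set" where
  "diagrams A k = {d. partition_on (verts k) d \<and> alg_cond A k d}"

fun Lambda :: "alg \<Rightarrow> nat \<Rightarrow> nat \<Rightarrow> nat list set" where
  "Lambda AP n k = {lam. partition_of n lam \<and> sum_list (tl lam) \<le> k}"
| "Lambda ARB n k = {lam. partition_of n lam \<and> sum_list (tl lam) \<le> k}"
| "Lambda AR n k = {lam. partition_of n lam \<and> sum_list (tl lam) \<le> k}"
| "Lambda AB n k = {lam. partition_of n lam \<and> sum_list (tl lam) \<le> k \<and>
                        even (sum_list (tl lam)) = even k}"
| "Lambda AM n k = {lam. partition_of n lam \<and> length lam \<le> 2 \<and> sum_list (tl lam) \<le> k}"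
| "Lambda APR n k = {lam. partition_of n lam \<and> length lam \<le> 2 \<and> sum_list (tl lam) \<le> k}"
| "Lambda ATL n k = {lam. partition_of n lam \<and> length lam \<le> 2 \<and> sum_list (tl lam) \<le> k \<and>
                        even (sum_list (tl lam)) = even k}"

definition perm_diagram :: "nat \<Rightarrow> (nat \<Rightarrow> nat) \<Rightarrow> diagram" where
  "perm_diagram k \<sigma> = {{(\<sigma> j, False), (j, True)} | j. j \<in> {1..k}}"

text \<open>gam s parts: the product of the cycles (s+a, s+a-1, ..., s+1) placed side by side.\<close>
fun gam :: "nat \<Rightarrow> nat list \<Rightarrow> nat \<Rightarrow> nat" where
  "gam s [] j = j"
| "gam s (a # as) j = (if s < j \<and> j \<le> s + a then (if j = s + 1 then s + a else j - 1)
                        else gam (s + a) as j)"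

definition gamma :: "nat list \<Rightarrow> nat \<Rightarrow> nat" where
  "gamma \<kappa> = gam 0 \<kappa>"

definition orb :: "(nat \<Rightarrow> nat) \<Rightarrow> nat \<Rightarrow> nat set" where
  "orb \<sigma> x = {(\<sigma> ^^ i) x | i. True}"

definition cycle_type :: "(nat \<Rightarrow> nat) \<Rightarrow> nat \<Rightarrow> nat multiset" where
  "cycle_type \<sigma> m = image_mset card (mset_set {orb \<sigma> x | x. x \<in> {1..m}})"

definition sym_mdiagrams :: "alg \<Rightarrow> nat \<Rightarrow> nat \<Rightarrow> diagram set" where
  "sym_mdiagrams A k m = {d \<in> diagrams A k. transp d = d \<and>
      (\<forall>B\<in>d. B \<subseteq> top_row \<or> B \<subseteq> bot_row \<or> (\<exists>S. B = S \<times> UNIV)) \<and> pn d = m}"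

definition maxtop :: "vtx set \<Rightarrow> nat" where
  "maxtop B = Max {i. (i, False) \<in> B}"

text \<open>1-based index of a propagating block, ordered by largest element.\<close>
definition pidx :: "diagram \<Rightarrow> vtx set \<Rightarrow> nat" where
  "pidx d B = Suc (card {C \<in> prop_blocks d. maxtop C < maxtop B})"

definition sigma_dw :: "diagram \<Rightarrow> diagram \<Rightarrow> nat \<Rightarrow> nat" where
  "sigma_dw d w i = (if i \<in> {1..pn w} then
     (THE j. \<exists>P\<in>prop_blocks w. \<exists>Q\<in>prop_blocks (d \<circ>\<^sub>d w \<circ>\<^sub>d transp d).
        pidx w P = i \<and> pidx (d \<circ>\<^sub>d w \<circ>\<^sub>d transp d) Q = j \<and>
        (\<exists>x\<in>P. \<exists>y\<in>Q. (lift 1 x, embed 3 y) \<in> (stack_rel [d, w, transp d])\<^sup>*))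
     else i)"

definition lin_comb :: "(nat \<Rightarrow> 'x \<Rightarrow> complex) \<Rightarrow> nat \<Rightarrow> (nat \<Rightarrow> complex) \<Rightarrow> 'x \<Rightarrow> complex" where
  "lin_comb bs r c = (\<lambda>x. \<Sum>i<r. c i * bs i x)"

definition is_basis_of :: "('x \<Rightarrow> complex) set \<Rightarrow> (nat \<Rightarrow> 'x \<Rightarrow> complex) \<Rightarrow> nat \<Rightarrow> bool" where
  "is_basis_of U bs r \<longleftrightarrow>
     (\<forall>c. lin_comb bs r c = (\<lambda>x. 0) \<longrightarrow> (\<forall>i<r. c i = 0)) \<and>
     {lin_comb bs r c | c. True} = U"

definition trace_on :: "('x \<Rightarrow> complex) set \<Rightarrow> (('x \<Rightarrow> complex) \<Rightarrow> ('x \<Rightarrow> complex)) \<Rightarrow> complex" where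
  "trace_on U f = (let br = (SOME br. is_basis_of U (fst br) (snd br)); bs = fst br; r = snd br in
     \<Sum>i<r. (THE c. (\<forall>j\<ge>r. c j = 0) \<and> f (bs i) = lin_comb bs r c) i)"

type_synonym tabloid = "nat \<Rightarrow> nat"

definition young :: "nat list \<Rightarrow> (nat \<times> nat) set" where
  "young \<nu> = {(r, c). r < length \<nu> \<and> c < \<nu> ! r}"

definition tableaux :: "nat list \<Rightarrow> (nat \<times> nat \<Rightarrow> nat) set" where
  "tableaux \<nu> = {T. bij_betw T (young \<nu>) {1..sum_list \<nu>} \<and> (\<forall>p. p \<notin> young \<nu> \<longrightarrow> T p = 0)}"

definition cell_of :: "nat list \<Rightarrow> (nat \<times> nat \<Rightarrow> nat) \<Rightarrow> nat \<Rightarrow> nat \<times> nat" where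
  "cell_of \<nu> T x = (THE p. p \<in> young \<nu> \<and> T p = x)"

definition tabloid_of :: "nat list \<Rightarrow> (nat \<times> nat \<Rightarrow> nat) \<Rightarrow> tabloid" where
  "tabloid_of \<nu> T = (\<lambda>x. if x \<in> {1..sum_list \<nu>} then fst (cell_of \<nu> T x) else 0)"

definition col_stab :: "nat list \<Rightarrow> (nat \<times> nat \<Rightarrow> nat) \<Rightarrow> (nat \<Rightarrow> nat) set" where
  "col_stab \<nu> T = {\<pi>. \<pi> permutes {1..sum_list \<nu>} \<and>
      (\<forall>x\<in>{1..sum_list \<nu>}. snd (cell_of \<nu> T (\<pi> x)) = snd (cell_of \<nu> T x))}"

definition polytabloid :: "nat list \<Rightarrow> (nat \<times> nat \<Rightarrow> nat) \<Rightarrow> tabloid \<Rightarrow> complex" where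
  "polytabloid \<nu> T = (\<lambda>t. \<Sum>\<pi>\<in>col_stab \<nu> T.
      of_int (sign \<pi>) * (if tabloid_of \<nu> T \<circ> inv \<pi> = t then 1 else 0))"

definition specht :: "nat list \<Rightarrow> (tabloid \<Rightarrow> complex) set" where
  "specht \<nu> = {(\<lambda>t. \<Sum>T\<in>tableaux \<nu>. c T * polytabloid \<nu> T t) | c. True}"

text \<open>Action of a permutation sigma on the permutation module: delta_t maps to delta_(sigma t).\<close>
definition perm_act :: "(nat \<Rightarrow> nat) \<Rightarrow> (tabloid \<Rightarrow> complex) \<Rightarrow> (tabloid \<Rightarrow> complex)" where
  "perm_act \<sigma> f = (\<lambda>t. f (t \<circ> \<sigma>))"

definition chi_S :: "nat list \<Rightarrow> (nat \<Rightarrow> nat) \<Rightarrow> complex" where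
  "chi_S \<nu> \<sigma> = trace_on (specht \<nu>) (perm_act \<sigma>)"

text \<open>Elements of C W^m (x) S^nu are represented as functions on (symmetric diagram, tabloid).\<close>
definition amod :: "alg \<Rightarrow> nat \<Rightarrow> nat list \<Rightarrow> (diagram \<times> tabloid \<Rightarrow> complex) set" where
  "amod A k lam = {F. (\<forall>w t. w \<notin> sym_mdiagrams A k (sum_list (tl lam)) \<longrightarrow> F (w, t) = 0) \<and>
      (\<forall>w\<in>sym_mdiagrams A k (sum_list (tl lam)). (\<lambda>t. F (w, t)) \<in> specht (tl lam))}"

definition amod_act :: "alg \<Rightarrow> nat \<Rightarrow> nat \<Rightarrow> nat list \<Rightarrow> diagram \<Rightarrow>
    (diagram \<times> tabloid \<Rightarrow> complex) \<Rightarrow> (diagram \<times> tabloid \<Rightarrow> complex)" where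
  "amod_act A n k lam d F = (\<lambda>(w', t).
     \<Sum>w\<in>{w \<in> sym_mdiagrams A k (sum_list (tl lam)).
            pn (d \<circ>\<^sub>d w \<circ>\<^sub>d transp d) = sum_list (tl lam) \<and> d \<circ>\<^sub>d w \<circ>\<^sub>d transp d = w'}.
       of_nat n ^ ell [d, w] * perm_act (sigma_dw d w) (\<lambda>s. F (w, s)) t)"

definition chi_A :: "alg \<Rightarrow> nat \<Rightarrow> nat \<Rightarrow> nat list \<Rightarrow> diagram \<Rightarrow> complex" where
  "chi_A A n k lam d = trace_on (amod A k lam) (amod_act A n k lam d)"

definition F_set :: "alg \<Rightarrow> nat \<Rightarrow> nat \<Rightarrow> nat list \<Rightarrow> nat list \<Rightarrow> diagram set" where
  "F_set A k m \<mu> \<kappa> = {w \<in> sym_mdiagrams A k m.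
      perm_diagram k (gamma \<kappa>) \<circ>\<^sub>d w \<circ>\<^sub>d transp (perm_diagram k (gamma \<kappa>)) = w \<and>
      cycle_type (sigma_dw (perm_diagram k (gamma \<kappa>)) w) m = mset \<mu>}"

end

(*
  Conjugating a symmetric m-diagram w by the permutation diagram d of a permutation \<sigma> closes no
  loops and yields the relabelled diagram \<sigma>(w), so d acts on C W^m \<otimes> S^\<nu> by permuting the
  basis diagrams, with \<sigma>_{d,w} acting on the fibre over w. Only the diagrams fixed by \<sigma>
  contribute to the trace, each with \<chi>^\<nu>(\<sigma>_{d,w}). As \<chi>^\<nu> is a class function this equals
  \<chi>^\<nu>(\<gamma>_\<mu>) for the cycle type \<mu> of \<sigma>_{d,w}; grouping the fixed diagrams by \<mu> gives the formula.
  That \<sigma>_{d,w} is a permutation comes from computing the connected components of the stack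
  [d, w, d^T]: the block P of w is connected exactly to the block \<sigma>(P) of the outer rows.
*)

theory Submission
  imports Defs "HOL-Combinatorics.Orbits"
begin

section \<open>Traces on finite-dimensional spaces of functions\<close>

definition fun_subspace :: "('x \<Rightarrow> complex) set \<Rightarrow> bool" where
  "fun_subspace U \<longleftrightarrow> (\<lambda>x. 0) \<in> U \<and> (\<forall>u\<in>U. \<forall>v\<in>U. \<forall>a b. (\<lambda>x. a * u x + b * v x) \<in> U)"

definition linear_functional_on :: "('x \<Rightarrow> complex) set \<Rightarrow> (('x \<Rightarrow> complex) \<Rightarrow> complex) \<Rightarrow> bool" where
  "linear_functional_on U p \<longleftrightarrow>
     (\<forall>u\<in>U. \<forall>v\<in>U. \<forall>a b. p (\<lambda>x. a * u x + b * v x) = a * p u + b * p v)"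

definition linear_map_on :: "('x \<Rightarrow> complex) set \<Rightarrow> (('x \<Rightarrow> complex) \<Rightarrow> ('x \<Rightarrow> complex)) \<Rightarrow> bool" where
  "linear_map_on U f \<longleftrightarrow> (\<forall>u\<in>U. f u \<in> U) \<and>
     (\<forall>u\<in>U. \<forall>v\<in>U. \<forall>a b. f (\<lambda>x. a * u x + b * v x) = (\<lambda>x. a * f u x + b * f v x))"

definition coord_frame :: "('x \<Rightarrow> complex) set \<Rightarrow> 'i set \<Rightarrow> ('i \<Rightarrow> 'x \<Rightarrow> complex) \<Rightarrow>
    ('i \<Rightarrow> ('x \<Rightarrow> complex) \<Rightarrow> complex) \<Rightarrow> bool" where
  "coord_frame U I b p \<longleftrightarrow> fun_subspace U \<and> finite I \<and> (\<forall>i\<in>I. b i \<in> U) \<and>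
     (\<forall>u\<in>U. u = (\<lambda>x. \<Sum>i\<in>I. p i u * b i x)) \<and>
     (\<forall>i\<in>I. \<forall>j\<in>I. p i (b j) = (if i = j then 1 else 0)) \<and>
     (\<forall>i\<in>I. linear_functional_on U (p i))"

lemma fun_subspaceD: "fun_subspace U \<Longrightarrow> u \<in> U \<Longrightarrow> v \<in> U \<Longrightarrow> (\<lambda>x. a * u x + b * v x) \<in> U"
  by (simp add: fun_subspace_def)

lemma fun_subspace_zero: "fun_subspace U \<Longrightarrow> (\<lambda>x. 0) \<in> U"
  by (simp add: fun_subspace_def)

lemma linear_functional_onD:
  "linear_functional_on U p \<Longrightarrow> u \<in> U \<Longrightarrow> v \<in> U \<Longrightarrow> p (\<lambda>x. a * u x + b * v x) = a * p u + b * p v"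
  by (simp add: linear_functional_on_def)

lemma linear_map_onD:
  "linear_map_on U f \<Longrightarrow> u \<in> U \<Longrightarrow> v \<in> U \<Longrightarrow> f (\<lambda>x. a * u x + b * v x) = (\<lambda>x. a * f u x + b * f v x)"
  by (simp add: linear_map_on_def)

lemma fun_subspace_sum:
  assumes "fun_subspace U" "finite J" "\<forall>j\<in>J. v j \<in> U"
  shows "(\<lambda>x. \<Sum>j\<in>J. c j * v j x) \<in> U"
  using assms(2,3)
proof (induction J rule: finite_induct)
  case empty then show ?case using assms(1) by (simp add: fun_subspace_def)
next
  case (insert j J)
  then have "(\<lambda>x. c j * v j x + 1 * (\<Sum>j\<in>J. c j * v j x)) \<in> U"
    using fun_subspaceD[OF assms(1), of "v j" "\<lambda>x. \<Sum>j\<in>J. c j * v j x" "c j" 1] insert by simp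
  then show ?case using insert by simp
qed

lemma linear_functional_on_zero:
  assumes "fun_subspace U" "linear_functional_on U p" shows "p (\<lambda>x. 0) = 0"
proof -
  note z = fun_subspace_zero[OF assms(1)]
  have "p (\<lambda>x. 0 * (0::complex) + 0 * 0) = 0 * p (\<lambda>x. 0) + 0 * p (\<lambda>x. 0)"
    using linear_functional_onD[OF assms(2) z z] by blast
  then show ?thesis by simp
qed

lemma linear_functional_on_sum:
  assumes "fun_subspace U" "linear_functional_on U p" "finite J" "\<forall>j\<in>J. v j \<in> U"
  shows "p (\<lambda>x. \<Sum>j\<in>J. c j * v j x) = (\<Sum>j\<in>J. c j * p (v j))"
  using assms(3,4)
proof (induction J rule: finite_induct)
  case empty then show ?case using linear_functional_on_zero[OF assms(1,2)] by simp
next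
  case (insert j J)
  have "(\<lambda>x. \<Sum>j\<in>J. c j * v j x) \<in> U" using fun_subspace_sum[OF assms(1)] insert by auto
  then have "p (\<lambda>x. c j * v j x + 1 * (\<Sum>j\<in>J. c j * v j x)) = c j * p (v j) + 1 * p (\<lambda>x. \<Sum>j\<in>J. c j * v j x)"
    using linear_functional_onD[OF assms(2)] insert(4) by blast
  then show ?case using insert by simp
qed

lemma linear_map_on_zero:
  assumes "fun_subspace U" "linear_map_on U f" shows "f (\<lambda>x. 0) = (\<lambda>x. 0)"
proof -
  have "f (\<lambda>x. 0 * (0::complex) + 0 * 0) = (\<lambda>x. 0 * f (\<lambda>x. 0) x + 0 * f (\<lambda>x. 0) x)"
    using linear_map_onD[OF assms(2) fun_subspace_zero[OF assms(1)] fun_subspace_zero[OF assms(1)]]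
    by blast
  then show ?thesis by simp
qed

lemma linear_map_on_sum:
  assumes "fun_subspace U" "linear_map_on U f" "finite J" "\<forall>j\<in>J. v j \<in> U"
  shows "f (\<lambda>x. \<Sum>j\<in>J. c j * v j x) = (\<lambda>x. \<Sum>j\<in>J. c j * f (v j) x)"
  using assms(3,4)
proof (induction J rule: finite_induct)
  case empty then show ?case using linear_map_on_zero[OF assms(1,2)] by simp
next
  case (insert j J)
  have "(\<lambda>x. \<Sum>j\<in>J. c j * v j x) \<in> U" using fun_subspace_sum[OF assms(1)] insert by auto
  then have "f (\<lambda>x. c j * v j x + 1 * (\<Sum>j\<in>J. c j * v j x)) =
        (\<lambda>x. c j * f (v j) x + 1 * f (\<lambda>x. \<Sum>j\<in>J. c j * v j x) x)"
    using linear_map_onD[OF assms(2)] insert(4) by blast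
  then show ?case using insert by simp
qed

text \<open>Both sums equal \<open>\<Sum>i j. p i (b' j) * q j (f (b i))\<close>.\<close>

lemma coord_frame_trace_eq:
  assumes F1: "coord_frame U I b p" and F2: "coord_frame U J b' q" and f: "linear_map_on U f"
  shows "(\<Sum>j\<in>J. q j (f (b' j))) = (\<Sum>i\<in>I. p i (f (b i)))"
proof -
  have sU: "fun_subspace U" and fI: "finite I" and bU: "\<forall>i\<in>I. b i \<in> U"
    and exp1: "\<forall>u\<in>U. u = (\<lambda>x. \<Sum>i\<in>I. p i u * b i x)" and lp: "\<forall>i\<in>I. linear_functional_on U (p i)"
    using F1 unfolding coord_frame_def by auto
  have fJ: "finite J" and b'U: "\<forall>j\<in>J. b' j \<in> U"
    and exp2: "\<forall>u\<in>U. u = (\<lambda>x. \<Sum>j\<in>J. q j u * b' j x)" and lq: "\<forall>j\<in>J. linear_functional_on U (q j)"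
    using F2 unfolding coord_frame_def by auto
  have fU: "\<forall>u\<in>U. f u \<in> U" using f unfolding linear_map_on_def by auto
  have "q j (f (b' j)) = (\<Sum>i\<in>I. p i (b' j) * q j (f (b i)))" if j: "j \<in> J" for j
  proof -
    have "f (b' j) = f (\<lambda>x. \<Sum>i\<in>I. p i (b' j) * b i x)" using exp1 b'U j by metis
    also have "\<dots> = (\<lambda>x. \<Sum>i\<in>I. p i (b' j) * f (b i) x)"
      by (rule linear_map_on_sum[OF sU f fI bU])
    finally show ?thesis
      using linear_functional_on_sum[OF sU lq[rule_format, OF j] fI] fU bU by auto
  qed
  then have "(\<Sum>j\<in>J. q j (f (b' j))) = (\<Sum>i\<in>I. \<Sum>j\<in>J. q j (f (b i)) * p i (b' j))"
    by (simp add: sum.swap[of _ J] mult.commute)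
  also have "\<dots> = (\<Sum>i\<in>I. p i (f (b i)))"
  proof (rule sum.cong[OF refl])
    fix i assume i: "i \<in> I"
    have "(\<lambda>x. \<Sum>j\<in>J. q j (f (b i)) * b' j x) = f (b i)"
      using exp2 fU bU i by metis
    then show "(\<Sum>j\<in>J. q j (f (b i)) * p i (b' j)) = p i (f (b i))"
      using linear_functional_on_sum[OF sU lp[rule_format, OF i] fJ b'U, of "\<lambda>j. q j (f (b i))"]
      by simp
  qed
  finally show ?thesis .
qed

lemma sum_delta_mult:
  assumes "finite A" shows "(\<Sum>j\<in>A. (if j = i then 1 else 0) * f j) = (if i \<in> A then f i else (0::complex))"
proof -
  have "(\<Sum>j\<in>A. (if j = i then 1 else 0) * f j) = (\<Sum>j\<in>A. if j = i then f j else 0)"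
    by (intro sum.cong) auto
  then show ?thesis using assms by (simp add: sum.delta')
qed

definition coord :: "(nat \<Rightarrow> 'x \<Rightarrow> complex) \<Rightarrow> nat \<Rightarrow> ('x \<Rightarrow> complex) \<Rightarrow> nat \<Rightarrow> complex" where
  "coord bs r u = (THE c. (\<forall>j\<ge>r. c j = 0) \<and> u = lin_comb bs r c)"

lemma lin_comb_cong: "(\<And>i. i < r \<Longrightarrow> c i = d i) \<Longrightarrow> lin_comb bs r c = lin_comb bs r d"
  unfolding lin_comb_def by (intro ext sum.cong) auto

lemma lin_comb_diff: "lin_comb bs r (\<lambda>i. c i - d i) = (\<lambda>x. lin_comb bs r c x - lin_comb bs r d x)"
  by (auto simp: lin_comb_def algebra_simps sum_subtractf)

lemma lin_comb_lincomb:
  "(\<lambda>x. a * lin_comb bs r c x + b * lin_comb bs r d x) = lin_comb bs r (\<lambda>i. a * c i + b * d i)"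
  by (auto simp: lin_comb_def fun_eq_iff sum_distrib_left sum.distrib algebra_simps)

lemma is_basis_of_coeffs_eq:
  assumes B: "is_basis_of U bs r" and "\<forall>j\<ge>r. c j = 0" "\<forall>j\<ge>r. d j = 0"
    and "lin_comb bs r c = lin_comb bs r d"
  shows "c = d"
proof -
  have "lin_comb bs r (\<lambda>i. c i - d i) = (\<lambda>x. 0)" using assms(4) by (simp add: lin_comb_diff)
  then have "\<forall>i<r. c i = d i" using B unfolding is_basis_of_def by force
  with assms(2,3) show ?thesis by (metis not_le ext)
qed

lemma coord_unique:
  assumes B: "is_basis_of U bs r" and d: "\<forall>j\<ge>r. d j = 0" and u: "u = lin_comb bs r d"
  shows "coord bs r u = d"
  unfolding coord_def using is_basis_of_coeffs_eq[OF B _ d] d u by (intro the_equality) auto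

lemma coord_expansion:
  assumes B: "is_basis_of U bs r" and u: "u \<in> U"
  shows "(\<forall>j\<ge>r. coord bs r u j = 0) \<and> u = lin_comb bs r (coord bs r u)"
proof -
  obtain c where c: "u = lin_comb bs r c" using B u unfolding is_basis_of_def by auto
  define c' where "c' = (\<lambda>j. if j < r then c j else 0)"
  have "u = lin_comb bs r c'" using c lin_comb_cong[of r c' c bs] by (auto simp: c'_def)
  moreover have "\<forall>j\<ge>r. c' j = 0" by (simp add: c'_def)
  ultimately show ?thesis using coord_unique[OF B] by simp
qed

lemma coord_frame_of_basis:
  assumes B: "is_basis_of U bs r"
  shows "coord_frame U {..<r} bs (\<lambda>i u. coord bs r u i)"
proof -
  have sp: "{lin_comb bs r c | c. True} = U" using B unfolding is_basis_of_def by auto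
  have sU: "fun_subspace U" unfolding fun_subspace_def
  proof (intro conjI ballI allI)
    show "(\<lambda>x. 0) \<in> U" using sp[symmetric] by (auto simp: lin_comb_def intro!: exI[of _ "\<lambda>_. 0"])
    fix u v a b assume "u \<in> U" "v \<in> U"
    then obtain c d where "u = lin_comb bs r c" "v = lin_comb bs r d" using sp by blast
    then show "(\<lambda>x. a * u x + b * v x) \<in> U" using sp lin_comb_lincomb by blast
  qed
  have unit: "bs j = lin_comb bs r (\<lambda>l. if l = j then 1 else 0)" if "j < r" for j
    using that by (auto simp: lin_comb_def fun_eq_iff sum_delta_mult)
  show ?thesis unfolding coord_frame_def
  proof (intro conjI ballI)
    show "bs i \<in> U" if "i \<in> {..<r}" for i using unit[of i] sp that by auto
    show "u = (\<lambda>x. \<Sum>i\<in>{..<r}. coord bs r u i * bs i x)" if "u \<in> U" for u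
      using coord_expansion[OF B that] unfolding lin_comb_def by simp
    show "coord bs r (bs j) i = (if i = j then 1 else 0)" if "i \<in> {..<r}" "j \<in> {..<r}" for i j
      using coord_unique[OF B _ unit[of j]] that by auto
    show "linear_functional_on U (\<lambda>u. coord bs r u i)" for i
      unfolding linear_functional_on_def
    proof (intro ballI allI)
      fix u v a b assume "u \<in> U" "v \<in> U"
      with coord_expansion[OF B] have
        "coord bs r (\<lambda>x. a * u x + b * v x) = (\<lambda>l. a * coord bs r u l + b * coord bs r v l)"
        by (intro coord_unique[OF B]) (auto simp: lin_comb_lincomb[symmetric])
      then show "coord bs r (\<lambda>x. a * u x + b * v x) i = a * coord bs r u i + b * coord bs r v i"
        by simp
    qed
  qed (use sU in auto)
qed

lemma basis_of_coord_frame: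
  assumes F: "coord_frame U I b p"
  shows "\<exists>bs r. is_basis_of U bs r"
proof -
  have sU: "fun_subspace U" and fI: "finite I" and bU: "\<forall>i\<in>I. b i \<in> U"
    and exp: "\<forall>u\<in>U. u = (\<lambda>x. \<Sum>i\<in>I. p i u * b i x)" and lp: "\<forall>i\<in>I. linear_functional_on U (p i)"
    and dl: "\<forall>i\<in>I. \<forall>j\<in>I. p i (b j) = (if i = j then 1 else 0)"
    using F unfolding coord_frame_def by auto
  define r where "r = card I"
  obtain h where hr: "bij_betw h {..<r} I"
    using ex_bij_betw_nat_finite[OF fI] by (auto simp: r_def atLeast0LessThan)
  define h' where "h' = inv_into {..<r} h"
  have lc: "lin_comb (b \<circ> h) r c = (\<lambda>x. \<Sum>i\<in>I. c (h' i) * b i x)" for c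
    unfolding lin_comb_def h'_def
    using sum.reindex_bij_betw[OF hr, of "\<lambda>i. c (inv_into {..<r} h i) * b i _"] hr
    by (auto simp: bij_betw_inv_into_left intro!: ext sum.cong)
  show ?thesis
  proof (intro exI[of _ "b \<circ> h"] exI[of _ r], unfold is_basis_of_def, intro conjI allI impI)
    fix c i assume z: "lin_comb (b \<circ> h) r c = (\<lambda>x. 0)" and i: "i < r"
    have hi: "h i \<in> I" using hr i by (auto simp: bij_betw_def)
    have "p (h i) (lin_comb (b \<circ> h) r c) = (\<Sum>j\<in>I. c (h' j) * p (h i) (b j))"
      unfolding lc by (rule linear_functional_on_sum[OF sU lp[rule_format, OF hi] fI bU])
    also have "\<dots> = (\<Sum>j\<in>I. if j = h i then c (h' j) else 0)"
      using dl hi by (intro sum.cong) auto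
    also have "\<dots> = c i" using hi hr i fI by (simp add: h'_def bij_betw_inv_into_left)
    finally show "c i = 0" using z linear_functional_on_zero[OF sU lp[rule_format, OF hi]] by simp
  next
    show "{lin_comb (b \<circ> h) r c |c. True} = U"
    proof (intro set_eqI iffI)
      fix u assume "u \<in> {lin_comb (b \<circ> h) r c |c. True}"
      then show "u \<in> U" using lc fun_subspace_sum[OF sU fI bU] by auto
    next
      fix u assume u: "u \<in> U"
      have "u = lin_comb (b \<circ> h) r (\<lambda>l. p (h l) u)"
        unfolding lc using exp u hr by (simp add: h'_def bij_betw_inv_into_right)
      then show "u \<in> {lin_comb (b \<circ> h) r c |c. True}" by blast
    qed
  qed
qed

text \<open>\<open>trace_on\<close> picks its basis by \<open>SOME\<close>; every frame gives the same value.\<close>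

lemma trace_on_coord_frame:
  assumes F: "coord_frame U I b p" and f: "linear_map_on U f"
  shows "trace_on U f = (\<Sum>i\<in>I. p i (f (b i)))"
proof -
  define br where "br = (SOME br. is_basis_of U (fst br) (snd br))"
  have B: "is_basis_of U (fst br) (snd br)"
    using basis_of_coord_frame[OF F] unfolding br_def by (metis fst_conv snd_conv someI)
  have "trace_on U f = (\<Sum>i<snd br. coord (fst br) (snd br) (f (fst br i)) i)"
    unfolding trace_on_def Let_def br_def[symmetric] coord_def by (rule refl)
  then show ?thesis
    using coord_frame_trace_eq[OF coord_frame_of_basis[OF B] F f] by simp
qed

definition span_of :: "'i set \<Rightarrow> ('i \<Rightarrow> 'x \<Rightarrow> complex) \<Rightarrow> ('x \<Rightarrow> complex) set" where
  "span_of I g = {(\<lambda>x. \<Sum>i\<in>I. c i * g i x) | c. True}"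

definition extend_span :: "('x \<Rightarrow> complex) set \<Rightarrow> ('x \<Rightarrow> complex) \<Rightarrow> ('x \<Rightarrow> complex) set" where
  "extend_span U g = {(\<lambda>x. v x + e * g x) | v e. v \<in> U}"

lemma span_of_insert:
  assumes "finite I" "i \<notin> I"
  shows "span_of (insert i I) g = extend_span (span_of I g) (g i)"
proof (intro set_eqI iffI)
  fix u assume "u \<in> span_of (insert i I) g"
  then obtain c where "u = (\<lambda>x. \<Sum>j\<in>insert i I. c j * g j x)" by (auto simp: span_of_def)
  then have "u = (\<lambda>x. (\<Sum>j\<in>I. c j * g j x) + c i * g i x)" using assms by (simp add: add.commute)
  then show "u \<in> extend_span (span_of I g) (g i)" by (auto simp: span_of_def extend_span_def)
next
  fix u assume "u \<in> extend_span (span_of I g) (g i)"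
  then obtain c e where u: "u = (\<lambda>x. (\<Sum>j\<in>I. c j * g j x) + e * g i x)"
    by (auto simp: span_of_def extend_span_def)
  have "\<forall>x. (\<Sum>j\<in>I. (c(i := e)) j * g j x) = (\<Sum>j\<in>I. c j * g j x)"
    using assms(2) by (auto intro!: sum.cong)
  then have "u = (\<lambda>x. \<Sum>j\<in>insert i I. (c(i := e)) j * g j x)"
    unfolding u using assms by (auto simp: add.commute)
  then show "u \<in> span_of (insert i I) g" by (auto simp: span_of_def)
qed

lemma extend_span_basis_in:
  assumes B: "is_basis_of U bs r" and g: "g \<in> U"
  shows "extend_span U g = U"
proof -
  have sU: "fun_subspace U" using coord_frame_of_basis[OF B] by (simp add: coord_frame_def)
  show ?thesis
  proof (intro set_eqI iffI)
    fix u assume "u \<in> extend_span U g"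
    then obtain v e where "u = (\<lambda>x. 1 * v x + e * g x)" "v \<in> U" by (auto simp: extend_span_def)
    then show "u \<in> U" using fun_subspaceD[OF sU _ g] by blast
  next
    fix u assume "u \<in> U"
    then have "(\<lambda>x. u x + 0 * g x) \<in> extend_span U g" unfolding extend_span_def by blast
    then show "u \<in> extend_span U g" by simp
  qed
qed

lemma extend_span_basis_notin:
  assumes B: "is_basis_of U bs r" and g: "g \<notin> U"
  shows "is_basis_of (extend_span U g) (bs(r := g)) (Suc r)"
proof -
  have ind: "\<And>c. lin_comb bs r c = (\<lambda>x. 0) \<Longrightarrow> \<forall>j<r. c j = 0"
    and sp: "{lin_comb bs r c | c. True} = U" using B unfolding is_basis_of_def by auto
  have lc': "lin_comb (bs(r := g)) (Suc r) c = (\<lambda>x. lin_comb bs r c x + c r * g x)" for c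
    by (auto simp: lin_comb_def fun_eq_iff intro!: sum.cong)
  show ?thesis
  proof (unfold is_basis_of_def, intro conjI allI impI)
    fix c j assume z: "lin_comb (bs(r := g)) (Suc r) c = (\<lambda>x. 0)" and j: "j < Suc r"
    have cr: "c r = 0"
    proof (rule ccontr)
      assume ne: "c r \<noteq> 0"
      have "g = (\<lambda>x. (- 1 / c r) * lin_comb bs r c x)"
      proof
        fix x
        have "lin_comb bs r c x + c r * g x = 0" using fun_cong[OF z[unfolded lc'], of x] by simp
        with ne show "g x = (- 1 / c r) * lin_comb bs r c x" by (simp add: field_simps add_eq_0_iff)
      qed
      also have "\<dots> = lin_comb bs r (\<lambda>j. (- 1 / c r) * c j)"
        using lin_comb_lincomb[of "- 1 / c r" bs r c 0 c] by simp
      finally show False using g sp by blast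
    qed
    have "lin_comb bs r c = (\<lambda>x. 0)" using z cr unfolding lc' by simp
    then show "c j = 0" using ind cr j by (cases "j = r") auto
  next
    show "{lin_comb (bs(r := g)) (Suc r) c |c. True} = extend_span U g"
    proof (intro set_eqI iffI)
      fix u assume "u \<in> {lin_comb (bs(r := g)) (Suc r) c |c. True}"
      then show "u \<in> extend_span U g" using lc' sp by (auto simp: extend_span_def)
    next
      fix u assume "u \<in> extend_span U g"
      then obtain c e where u: "u = (\<lambda>x. lin_comb bs r c x + e * g x)"
        using sp by (auto simp: extend_span_def)
      have "lin_comb bs r c = lin_comb bs r (c(r := e))" by (rule lin_comb_cong) auto
      then have "u = lin_comb (bs(r := g)) (Suc r) (c(r := e))" unfolding lc' u by simp
      then show "u \<in> {lin_comb (bs(r := g)) (Suc r) c |c. True}" by blast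
    qed
  qed
qed

lemma span_of_basis:
  assumes "finite I" shows "\<exists>bs r. is_basis_of (span_of I g) bs r"
  using assms
proof (induction I rule: finite_induct)
  case empty
  show ?case
    by (rule exI[of _ "\<lambda>_ _. 0"], rule exI[of _ 0])
      (auto simp: is_basis_of_def span_of_def lin_comb_def)
next
  case (insert i I)
  then obtain bs r where B: "is_basis_of (span_of I g) bs r" by blast
  show ?case
  proof (cases "g i \<in> span_of I g")
    case True
    then show ?thesis using B extend_span_basis_in[OF B True] span_of_insert[OF insert(1,2)] by metis
  next
    case False
    then show ?thesis using extend_span_basis_notin[OF B False] span_of_insert[OF insert(1,2)] by metis
  qed
qed

lemma span_of_coord_frame:
  assumes "finite I"
  obtains bs r where "coord_frame (span_of I g) {..<r} bs (\<lambda>i u. coord bs r u i)"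
  using span_of_basis[OF assms] coord_frame_of_basis by blast

lemma coord_frame_transport:
  assumes F: "coord_frame U I b q" and g: "linear_map_on U g" and h: "linear_map_on U h"
    and hg: "\<And>u. u \<in> U \<Longrightarrow> h (g u) = u" and gh: "\<And>u. u \<in> U \<Longrightarrow> g (h u) = u"
  shows "coord_frame U I (\<lambda>i. g (b i)) (\<lambda>i u. q i (h u))"
proof -
  have sU: "fun_subspace U" and fI: "finite I" and bU: "\<forall>i\<in>I. b i \<in> U"
    and ex: "\<forall>u\<in>U. u = (\<lambda>x. \<Sum>i\<in>I. q i u * b i x)"
    and dl: "\<forall>i\<in>I. \<forall>j\<in>I. q i (b j) = (if i = j then 1 else 0)"
    and lq: "\<forall>i\<in>I. linear_functional_on U (q i)"
    using F unfolding coord_frame_def by auto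
  have gU: "g u \<in> U" and hU: "h u \<in> U" if "u \<in> U" for u
    using g h that by (auto simp: linear_map_on_def)
  show ?thesis unfolding coord_frame_def
  proof (intro conjI ballI)
    show "u = (\<lambda>x. \<Sum>i\<in>I. q i (h u) * g (b i) x)" if u: "u \<in> U" for u
    proof -
      have "u = g (\<lambda>x. \<Sum>i\<in>I. q i (h u) * b i x)" using ex hU[OF u] gh[OF u] by metis
      then show ?thesis using linear_map_on_sum[OF sU g fI bU] by simp
    qed
    show "q i (h (g (b j))) = (if i = j then 1 else 0)" if "i \<in> I" "j \<in> I" for i j
      using dl hg bU that by simp
    show "linear_functional_on U (\<lambda>u. q i (h u))" if i: "i \<in> I" for i
      unfolding linear_functional_on_def
      using linear_map_onD[OF h] linear_functional_onD[OF lq[rule_format, OF i] hU hU] by simp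
  qed (use sU fI bU gU in auto)
qed

lemma trace_on_conj:
  assumes F: "coord_frame U I b q" and f: "linear_map_on U f"
    and g: "linear_map_on U g" and h: "linear_map_on U h"
    and hg: "\<And>u. u \<in> U \<Longrightarrow> h (g u) = u" and gh: "\<And>u. u \<in> U \<Longrightarrow> g (h u) = u"
  shows "trace_on U (\<lambda>u. g (f (h u))) = trace_on U f"
proof -
  have fU: "f u \<in> U" if "u \<in> U" for u using f that by (simp add: linear_map_on_def)
  have "linear_map_on U (\<lambda>u. g (f (h u)))"
    using f g h unfolding linear_map_on_def by (simp add: fU)
  then have "trace_on U (\<lambda>u. g (f (h u))) = (\<Sum>i\<in>I. q i (h (g (f (h (g (b i)))))))"
    using trace_on_coord_frame[OF coord_frame_transport[OF F g h hg gh]] by simp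
  also have "\<dots> = (\<Sum>i\<in>I. q i (f (b i)))"
    using F hg fU by (simp add: coord_frame_def)
  finally show ?thesis using trace_on_coord_frame[OF F f] by simp
qed

section \<open>The permutations \<open>\<gamma>\<^sub>\<kappa>\<close> and cycle types\<close>

definition cycle_down :: "nat \<Rightarrow> nat \<Rightarrow> nat \<Rightarrow> nat" where
  "cycle_down s a j = (if s < j \<and> j \<le> s + a then (if j = s + 1 then s + a else j - 1) else j)"

definition cycle_up :: "nat \<Rightarrow> nat \<Rightarrow> nat \<Rightarrow> nat" where
  "cycle_up s a j = (if s < j \<and> j \<le> s + a then (if j = s + a then s + 1 else j + 1) else j)"

lemma cycle_down_permutes: "cycle_down s a permutes {s+1..s+a}"
proof -
  have "cycle_down s a \<circ> cycle_up s a = id" "cycle_up s a \<circ> cycle_down s a = id"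
    by (auto simp: cycle_down_def cycle_up_def fun_eq_iff)
  then have "bij (cycle_down s a)" by (metis o_bij)
  then show ?thesis unfolding permutes_def bij_iff by (auto simp: cycle_down_def)
qed

lemma gam_greater: "s < j \<Longrightarrow> s < gam s as j"
proof (induction as arbitrary: s)
  case (Cons a as)
  show ?case
  proof (cases "j \<le> s + a")
    case False
    then have "s + a < gam (s + a) as j" by (intro Cons.IH) simp
    then show ?thesis using False by simp
  qed (use Cons.prems in auto)
qed simp

lemma gam_outside: "j \<notin> {s+1..s+sum_list as} \<Longrightarrow> gam s as j = j"
  by (induction as arbitrary: s) auto

lemma gam_Cons: "gam s (a # as) = cycle_down s a \<circ> gam (s + a) as"
proof
  fix j
  show "gam s (a # as) j = (cycle_down s a \<circ> gam (s + a) as) j"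
  proof (cases "s + a < j")
    case True
    then show ?thesis using gam_greater[OF True, of as] by (auto simp: cycle_down_def)
  next
    case False
    then show ?thesis using gam_outside[of j "s + a" as] by (auto simp: cycle_down_def)
  qed
qed

lemma gam_permutes: "gam s as permutes {s+1..s+sum_list as}"
proof (induction as arbitrary: s)
  case Nil
  show ?case by (simp add: permutes_id[unfolded id_def])
next
  case (Cons a as)
  have "cycle_down s a permutes {s+1..s+sum_list (a#as)}"
    by (rule permutes_subset[OF cycle_down_permutes]) auto
  moreover have "gam (s + a) as permutes {s+1..s+sum_list (a#as)}"
    by (rule permutes_subset[OF Cons]) auto
  ultimately show ?case unfolding gam_Cons by (rule permutes_compose[rotated])
qed

lemma gamma_permutes: "gamma \<kappa> permutes {1..sum_list \<kappa>}"
  using gam_permutes[of 0 \<kappa>] by (simp add: gamma_def)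

lemma permutes_interval_permutation: "\<sigma> permutes {a..b::nat} \<Longrightarrow> permutation \<sigma>"
  unfolding permutation_permutes by (rule exI[of _ "{a..b}"]) simp

lemma orbit_eq_of_mem: "permutation \<sigma> \<Longrightarrow> y \<in> orbit \<sigma> x \<Longrightarrow> orbit \<sigma> y = orbit \<sigma> x"
  by (rule orbit_cyclic_eq3[OF cyclic_on_orbit'])

lemma orbit_funpow_enum:
  assumes p: "permutation \<sigma>" and B: "B = orbit \<sigma> x"
  defines "x0 \<equiv> SOME x. x \<in> B"
  shows "x0 \<in> B" "0 < card B" "(\<sigma> ^^ card B) x0 = x0"
    "bij_betw (\<lambda>i. (\<sigma> ^^ i) x0) {..<card B} B"
proof -
  show x0: "x0 \<in> B" unfolding x0_def B by (rule someI, rule permutation_self_in_orbit[OF p])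
  have B0: "B = orbit \<sigma> x0" using orbit_eq_of_mem[OF p] x0 B by simp
  have x0': "x0 \<in> orbit \<sigma> x0" using x0 B0 by simp
  have e: "B = (\<lambda>n. (\<sigma> ^^ n) x0) ` {0..<funpow_dist1 \<sigma> x0 x0}"
    unfolding B0 by (rule orbit_conv_funpow_dist1[OF x0'])
  have i: "inj_on (\<lambda>n. (\<sigma> ^^ n) x0) {0..<funpow_dist1 \<sigma> x0 x0}"
    by (rule inj_on_funpow_dist1[OF x0'])
  have c: "card B = funpow_dist1 \<sigma> x0 x0" unfolding e using card_image[OF i] by simp
  show "0 < card B" unfolding c by simp
  show "(\<sigma> ^^ card B) x0 = x0" unfolding c by (rule funpow_dist1_prop[OF x0'])
  show "bij_betw (\<lambda>i. (\<sigma> ^^ i) x0) {..<card B} B"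
    unfolding c bij_betw_def using i e by (simp add: atLeast0LessThan)
qed

text \<open>Lays the orbits \<open>Bs\<close> out consecutively after \<open>s\<close>, each one backwards along \<open>\<sigma>\<close>,
  so that it intertwines \<open>gam s (map card Bs)\<close> with \<open>\<sigma>\<close>.\<close>

fun orbit_layout :: "(nat \<Rightarrow> nat) \<Rightarrow> nat \<Rightarrow> nat set list \<Rightarrow> nat \<Rightarrow> nat" where
  "orbit_layout \<sigma> s [] j = j"
| "orbit_layout \<sigma> s (B # Bs) j = (if s < j \<and> j \<le> s + card B
      then (\<sigma> ^^ (card B - (j - s))) (SOME x. x \<in> B) else orbit_layout \<sigma> (s + card B) Bs j)"

lemma orbit_layout_outside: "j \<notin> {s+1..s+sum_list (map card Bs)} \<Longrightarrow> orbit_layout \<sigma> s Bs j = j"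
  by (induction Bs arbitrary: s) auto

lemma orbit_layout_intertwines:
  assumes p: "permutation \<sigma>" and orbs: "\<forall>B\<in>set Bs. B \<in> range (orbit \<sigma>)"
    and j: "s < j" "j \<le> s + sum_list (map card Bs)"
  shows "\<sigma> (orbit_layout \<sigma> s Bs j) = orbit_layout \<sigma> s Bs (gam s (map card Bs) j)"
  using orbs j
proof (induction Bs arbitrary: s)
  case Nil then show ?case by simp
next
  case (Cons B Bs)
  define a where "a = card B"
  define x0 where "x0 = (SOME x. x \<in> B)"
  obtain x where "B = orbit \<sigma> x" using Cons.prems by auto
  note B = orbit_funpow_enum[OF p this, folded x0_def a_def]
  show ?case
  proof (cases "j \<le> s + a")
    case True
    have "\<sigma> ((\<sigma> ^^ (a - (j - s))) x0) = (\<sigma> ^^ (a - (gam s (map card (B # Bs)) j - s))) x0"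
    proof (cases "j = s + 1")
      case True
      have "\<sigma> ((\<sigma> ^^ (a - 1)) x0) = (\<sigma> ^^ Suc (a - 1)) x0" by simp
      then show ?thesis using B(2,3) True \<open>j \<le> s + a\<close> by (simp add: a_def[symmetric])
    next
      case False
      have "\<sigma> ((\<sigma> ^^ (a - (j - s))) x0) = (\<sigma> ^^ Suc (a - (j - s))) x0" by simp
      also have "Suc (a - (j - s)) = a - (j - 1 - s)" using \<open>j \<le> s + a\<close> Cons.prems False by auto
      finally show ?thesis using False True Cons.prems by (simp add: a_def[symmetric])
    qed
    moreover have "s < gam s (map card (B # Bs)) j \<and> gam s (map card (B # Bs)) j \<le> s + a"
      using True Cons.prems B(2) by (auto simp: a_def)
    ultimately show ?thesis using True Cons.prems by (simp add: a_def[symmetric] x0_def[symmetric])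
  next
    case False
    then have j2: "s + a < j" by simp
    have "gam s (map card (B # Bs)) j = gam (s + a) (map card Bs) j" using False by (auto simp: a_def)
    moreover have "s + a < gam (s + a) (map card Bs) j" by (rule gam_greater[OF j2])
    ultimately show ?thesis
      using Cons.IH[of "s + a"] Cons.prems j2 False by (simp add: a_def[symmetric])
  qed
qed

lemma orbit_layout_bij:
  assumes p: "permutation \<sigma>" and orbs: "\<forall>B\<in>set Bs. B \<in> range (orbit \<sigma>)" and "distinct Bs"
    and disj: "\<forall>B\<in>set Bs. \<forall>C\<in>set Bs. B \<noteq> C \<longrightarrow> B \<inter> C = {}"
  shows "bij_betw (orbit_layout \<sigma> s Bs) {s+1..s+sum_list (map card Bs)} (\<Union>(set Bs))"
  using assms(2-)
proof (induction Bs arbitrary: s)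
  case Nil then show ?case by (simp add: bij_betw_def)
next
  case (Cons B Bs)
  define a where "a = card B"
  define x0 where "x0 = (SOME x. x \<in> B)"
  obtain x where "B = orbit \<sigma> x" using Cons.prems by auto
  note B = orbit_funpow_enum[OF p this, folded x0_def a_def]
  have "bij_betw (\<lambda>j. a - (j - s)) {s+1..s+a} {..<a}"
    by (rule bij_betw_byWitness[where f'="\<lambda>i. s + a - i"]) auto
  from bij_betw_trans[OF this B(4)]
  have b1: "bij_betw (orbit_layout \<sigma> s (B # Bs)) {s+1..s+a} B"
    by (rule bij_betw_cong[THEN iffD1, rotated]) (auto simp: a_def x0_def)
  have "bij_betw (orbit_layout \<sigma> (s + a) Bs) {s+a+1..s+a+sum_list (map card Bs)} (\<Union>(set Bs))"
    using Cons.IH[of "s + a"] Cons.prems by auto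
  then have b2: "bij_betw (orbit_layout \<sigma> s (B # Bs)) {s+a+1..s+a+sum_list (map card Bs)} (\<Union>(set Bs))"
    by (rule bij_betw_cong[THEN iffD1, rotated]) (auto simp: a_def)
  have "B \<inter> \<Union>(set Bs) = {}" using Cons.prems by auto
  moreover have "{s+1..s+a} \<union> {s+a+1..s+a+sum_list (map card Bs)} = {s+1..s+sum_list (map card (B # Bs))}"
    by (auto simp: a_def)
  ultimately show ?case using bij_betw_combine[OF b1 b2] by (simp del: orbit_layout.simps)
qed

lemma cycle_type_orbits:
  assumes "\<sigma> permutes {1..m}"
  shows "cycle_type \<sigma> m = image_mset card (mset_set (orbit \<sigma> ` {1..m}))"
proof -
  have "orb \<sigma> = orbit \<sigma>"
    using permutes_interval_permutation[OF assms] by (simp add: orb_def orbit_altdef_permutation fun_eq_iff)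
  then show ?thesis unfolding cycle_type_def by (simp only: Setcompr_eq_image)
qed

lemma orbits_partition:
  fixes \<sigma> :: "nat \<Rightarrow> nat"
  assumes sp: "\<sigma> permutes {1..m}"
  shows "\<Union>(orbit \<sigma> ` {1..m}) = {1..m}"
    and "\<forall>B\<in>orbit \<sigma> ` {1..m}. \<forall>C\<in>orbit \<sigma> ` {1..m}. B \<noteq> C \<longrightarrow> B \<inter> C = {}"
proof -
  note p = permutes_interval_permutation[OF sp]
  show "\<Union>(orbit \<sigma> ` {1..m}) = {1..m}"
    using permutes_orbit_subset[OF sp] permutation_self_in_orbit[OF p] by blast
  show "\<forall>B\<in>orbit \<sigma> ` {1..m}. \<forall>C\<in>orbit \<sigma> ` {1..m}. B \<noteq> C \<longrightarrow> B \<inter> C = {}"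
  proof (intro ballI impI)
    fix B C assume "B \<in> orbit \<sigma> ` {1..m}" "C \<in> orbit \<sigma> ` {1..m}" "B \<noteq> C"
    then obtain x y where xy: "B = orbit \<sigma> x" "C = orbit \<sigma> y" "orbit \<sigma> x \<noteq> orbit \<sigma> y" by blast
    show "B \<inter> C = {}"
    proof (rule ccontr)
      assume "B \<inter> C \<noteq> {}"
      then obtain z where "z \<in> orbit \<sigma> x" "z \<in> orbit \<sigma> y" using xy by blast
      then show False using orbit_eq_of_mem[OF p] xy(3) by metis
    qed
  qed
qed

lemma list_of_image_mset:
  assumes "finite A" "image_mset f (mset_set A) = mset ys"
  shows "\<exists>xs. distinct xs \<and> set xs = A \<and> map f xs = ys"
  using assms
proof (induction ys arbitrary: A)
  case Nil
  then show ?case by (auto simp: mset_set_empty_iff)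
next
  case (Cons y ys)
  have "y \<in> f ` A" using Cons.prems by (metis finite_set_mset_mset_set in_image_mset list.set_intros(1) set_mset_mset)
  then obtain a where a: "a \<in> A" "f a = y" by blast
  have "mset_set A = add_mset a (mset_set (A - {a}))" using mset_set.remove[OF Cons.prems(1) a(1)] .
  then have "image_mset f (mset_set (A - {a})) = mset ys" using Cons.prems(2) a(2) by simp
  then obtain xs where xs: "distinct xs" "set xs = A - {a}" "map f xs = ys"
    using Cons.IH Cons.prems(1) by blast
  show ?case using xs a by (intro exI[of _ "a # xs"]) auto
qed

theorem permutes_conj_gamma:
  assumes sp: "\<sigma> permutes {1..m}" and mu: "partition_of m \<mu>" and ct: "cycle_type \<sigma> m = mset \<mu>"
  obtains \<tau> where "\<tau> permutes {1..m}" "\<sigma> = \<tau> \<circ> gamma \<mu> \<circ> inv \<tau>"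
proof -
  note p = permutes_interval_permutation[OF sp]
  note orbs = orbits_partition[OF sp]
  obtain os where os: "distinct os" "set os = orbit \<sigma> ` {1..m}" "map card os = \<mu>"
    using list_of_image_mset[of "orbit \<sigma> ` {1..m}" card \<mu>] ct cycle_type_orbits[OF sp] by auto
  define \<tau> where "\<tau> = orbit_layout \<sigma> 0 os"
  have sm: "sum_list (map card os) = m" using os(3) mu by (simp add: partition_of_def)
  have "bij_betw \<tau> {1..m} {1..m}"
    using orbit_layout_bij[OF p, of os 0] os orbs sm by (auto simp: \<tau>_def)
  then have tp: "\<tau> permutes {1..m}"
    by (rule bij_imp_permutes) (use orbit_layout_outside[of _ 0 os \<sigma>] sm in \<open>auto simp: \<tau>_def\<close>)
  have "\<sigma> \<circ> \<tau> = \<tau> \<circ> gamma \<mu>"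
  proof
    fix j
    show "(\<sigma> \<circ> \<tau>) j = (\<tau> \<circ> gamma \<mu>) j"
    proof (cases "j \<in> {1..m}")
      case True
      then show ?thesis using orbit_layout_intertwines[OF p, of os 0 j] os sm
        by (auto simp: \<tau>_def gamma_def)
    next
      case False
      then show ?thesis using permutes_not_in[OF tp] permutes_not_in[OF sp]
          gam_outside[of j 0 \<mu>] os(3) sm by (auto simp: gamma_def)
    qed
  qed
  then have "\<sigma> = \<tau> \<circ> gamma \<mu> \<circ> inv \<tau>"
    using permutes_inv_o(1)[OF tp] by (metis comp_assoc comp_id)
  then show ?thesis using tp that by blast
qed

lemma cycle_type_partition:
  assumes sp: "\<sigma> permutes {1..m}"
  obtains \<mu> where "partition_of m \<mu>" "cycle_type \<sigma> m = mset \<mu>"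
proof -
  note p = permutes_interval_permutation[OF sp]
  note orbs = orbits_partition[OF sp]
  obtain xs where xs: "mset xs = cycle_type \<sigma> m" using ex_mset by blast
  define \<mu> where "\<mu> = rev (sort xs)"
  have ms: "mset \<mu> = image_mset card (mset_set (orbit \<sigma> ` {1..m}))"
    by (simp add: \<mu>_def xs cycle_type_orbits[OF sp])
  have "sum_list \<mu> = (\<Sum>B\<in>orbit \<sigma> ` {1..m}. card B)"
    by (simp add: sum_mset_sum_list[symmetric] ms sum_unfold_sum_mset)
  also have "\<dots> = m"
    using orbs by (subst card_Union_disjoint[symmetric])
      (auto simp: pairwise_def disjnt_def finite_orbit permutation_self_in_orbit[OF p])
  finally have "sum_list \<mu> = m" .
  moreover have "\<forall>x\<in>set \<mu>. 0 < x"
  proof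
    fix x assume "x \<in> set \<mu>"
    then have "x \<in># image_mset card (mset_set (orbit \<sigma> ` {1..m}))" using ms by (metis set_mset_mset)
    then obtain y where "x = card (orbit \<sigma> y)" by auto
    then show "0 < x" using orbit_funpow_enum(2)[OF p] by blast
  qed
  moreover have "sorted_wrt (\<ge>) \<mu>" unfolding \<mu>_def sorted_wrt_rev by simp
  ultimately show ?thesis using that ms cycle_type_orbits[OF sp] by (auto simp: partition_of_def)
qed

lemma partition_of_mset_eq:
  assumes "partition_of m \<mu>" "partition_of m' \<nu>" "mset \<mu> = mset \<nu>"
  shows "\<mu> = \<nu>"
proof -
  have "sorted (rev \<mu>)" "sorted (rev \<nu>)" using assms(1,2)
    by (auto simp: partition_of_def sorted_wrt_rev)
  moreover have "mset (rev \<mu>) = mset (rev \<nu>)" using assms(3) by simp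
  ultimately have "rev \<mu> = rev \<nu>" by (metis properties_for_sort)
  then show ?thesis by simp
qed

section \<open>Characters of Specht modules are class functions\<close>

lemma bij_comp_inv_cancel:
  assumes "bij \<sigma>" shows "\<sigma> \<circ> inv \<sigma> = id" "inv \<sigma> \<circ> \<sigma> = id"
  using assms surj_iff[of \<sigma>] inj_iff[of \<sigma>] by (auto simp: bij_def)

lemma inj_conj: "bij \<sigma> \<Longrightarrow> inj (\<lambda>\<pi>. \<sigma> \<circ> \<pi> \<circ> inv \<sigma>)"
  by (rule inj_on_inverseI[where g = "\<lambda>\<pi>. inv \<sigma> \<circ> \<pi> \<circ> \<sigma>"])
    (simp add: comp_assoc bij_comp_inv_cancel, simp add: comp_assoc[symmetric] bij_comp_inv_cancel)

lemma inv_conj: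
  assumes "bij \<sigma>" "bij \<pi>" shows "inv (\<sigma> \<circ> \<pi> \<circ> inv \<sigma>) = \<sigma> \<circ> inv \<pi> \<circ> inv \<sigma>"
proof -
  have "inv (\<sigma> \<circ> \<pi> \<circ> inv \<sigma>) = inv (inv \<sigma>) \<circ> inv (\<sigma> \<circ> \<pi>)"
    by (rule o_inv_distrib) (use assms bij_imp_bij_inv bij_comp in auto)
  also have "\<dots> = \<sigma> \<circ> (inv \<pi> \<circ> inv \<sigma>)"
    using o_inv_distrib[OF assms(1,2)] inv_inv_eq[OF assms(1)] by simp
  finally show ?thesis by (simp add: o_assoc)
qed

lemma sign_conj:
  assumes "permutation \<sigma>" "permutation \<pi>" shows "sign (\<sigma> \<circ> \<pi> \<circ> inv \<sigma>) = sign \<pi>"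
  using assms by (simp add: sign_compose permutation_compose permutation_inverse sign_inverse)

lemma comp_inv_eq_iff: "bij \<sigma> \<Longrightarrow> f \<circ> inv \<sigma> = t \<longleftrightarrow> f = t \<circ> \<sigma>"
  by (metis bij_comp_inv_cancel comp_assoc comp_id)

lemma perm_act_comp: "perm_act \<sigma> (perm_act \<tau> f) = perm_act (\<sigma> \<circ> \<tau>) f"
  by (simp add: perm_act_def o_assoc)

lemma perm_act_id: "perm_act id f = f"
  by (simp add: perm_act_def)

lemma perm_act_sum: "perm_act \<sigma> (\<lambda>x. \<Sum>j\<in>J. c j * v j x) = (\<lambda>x. \<Sum>j\<in>J. c j * perm_act \<sigma> (v j) x)"
  by (simp add: perm_act_def)

lemma cell_of_comp:
  assumes sp: "\<sigma> permutes {1..sum_list \<nu>}"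
  shows "cell_of \<nu> (\<sigma> \<circ> T) x = cell_of \<nu> T (inv \<sigma> x)"
proof -
  have "(\<lambda>p. p \<in> young \<nu> \<and> (\<sigma> \<circ> T) p = x) = (\<lambda>p. p \<in> young \<nu> \<and> T p = inv \<sigma> x)"
    using permutes_inverses[OF sp] by (auto simp: fun_eq_iff)
  then show ?thesis unfolding cell_of_def by simp
qed

lemma tabloid_of_comp:
  assumes sp: "\<sigma> permutes {1..sum_list \<nu>}"
  shows "tabloid_of \<nu> (\<sigma> \<circ> T) = tabloid_of \<nu> T \<circ> inv \<sigma>"
proof
  fix x
  have ip: "inv \<sigma> permutes {1..sum_list \<nu>}" by (rule permutes_inv[OF sp])
  show "tabloid_of \<nu> (\<sigma> \<circ> T) x = (tabloid_of \<nu> T \<circ> inv \<sigma>) x"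
  proof (cases "x \<in> {1..sum_list \<nu>}")
    case True
    then have "inv \<sigma> x \<in> {1..sum_list \<nu>}" using permutes_in_image[OF ip] by blast
    then show ?thesis using True by (simp add: tabloid_of_def cell_of_comp[OF sp])
  next
    case False
    then show ?thesis using permutes_not_in[OF ip] by (auto simp: tabloid_of_def)
  qed
qed

lemma col_stab_conj_mem:
  assumes sp: "\<sigma> permutes {1..sum_list \<nu>}" and "\<pi> \<in> col_stab \<nu> T"
  shows "\<sigma> \<circ> \<pi> \<circ> inv \<sigma> \<in> col_stab \<nu> (\<sigma> \<circ> T)"
proof -
  have ip: "inv \<sigma> permutes {1..sum_list \<nu>}" by (rule permutes_inv[OF sp])
  have pp: "\<pi> permutes {1..sum_list \<nu>}" using assms by (simp add: col_stab_def)
  have "snd (cell_of \<nu> T (\<pi> (inv \<sigma> x))) = snd (cell_of \<nu> T (inv \<sigma> x))" if "x \<in> {1..sum_list \<nu>}" for x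
    using assms permutes_in_image[OF ip] that by (simp add: col_stab_def)
  then show ?thesis
    using permutes_compose[OF permutes_compose[OF ip pp] sp]
    by (simp add: col_stab_def cell_of_comp[OF sp] permutes_inverses[OF sp] o_assoc)
qed

lemma col_stab_comp:
  assumes sp: "\<sigma> permutes {1..sum_list \<nu>}"
  shows "col_stab \<nu> (\<sigma> \<circ> T) = (\<lambda>\<pi>. \<sigma> \<circ> \<pi> \<circ> inv \<sigma>) ` col_stab \<nu> T"
proof
  show "(\<lambda>\<pi>. \<sigma> \<circ> \<pi> \<circ> inv \<sigma>) ` col_stab \<nu> T \<subseteq> col_stab \<nu> (\<sigma> \<circ> T)"
    using col_stab_conj_mem[OF sp] by blast
next
  have b: "bij \<sigma>" by (rule permutes_bij[OF sp])
  show "col_stab \<nu> (\<sigma> \<circ> T) \<subseteq> (\<lambda>\<pi>. \<sigma> \<circ> \<pi> \<circ> inv \<sigma>) ` col_stab \<nu> T"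
  proof
    fix \<pi>' assume "\<pi>' \<in> col_stab \<nu> (\<sigma> \<circ> T)"
    from col_stab_conj_mem[OF permutes_inv[OF sp] this]
    have "inv \<sigma> \<circ> \<pi>' \<circ> \<sigma> \<in> col_stab \<nu> T"
      by (simp add: inv_inv_eq[OF b] bij_comp_inv_cancel[OF b] comp_assoc[symmetric])
    moreover have "\<pi>' = \<sigma> \<circ> (inv \<sigma> \<circ> \<pi>' \<circ> \<sigma>) \<circ> inv \<sigma>"
      by (simp add: comp_assoc bij_comp_inv_cancel[OF b], simp add: comp_assoc[symmetric] bij_comp_inv_cancel[OF b])
    ultimately show "\<pi>' \<in> (\<lambda>\<pi>. \<sigma> \<circ> \<pi> \<circ> inv \<sigma>) ` col_stab \<nu> T" by blast
  qed
qed

text \<open>Relabelling a tableau by \<open>\<sigma>\<close> conjugates its column stabiliser, which preserves signs.\<close>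

lemma perm_act_polytabloid:
  assumes sp: "\<sigma> permutes {1..sum_list \<nu>}"
  shows "perm_act \<sigma> (polytabloid \<nu> T) = polytabloid \<nu> (\<sigma> \<circ> T)"
proof
  fix t
  have b: "bij \<sigma>" by (rule permutes_bij[OF sp])
  have ps: "permutation \<sigma>" by (rule permutes_interval_permutation[OF sp])
  have "polytabloid \<nu> (\<sigma> \<circ> T) t = (\<Sum>\<pi>\<in>col_stab \<nu> T. of_int (sign (\<sigma> \<circ> \<pi> \<circ> inv \<sigma>)) *
      (if tabloid_of \<nu> T \<circ> inv \<sigma> \<circ> inv (\<sigma> \<circ> \<pi> \<circ> inv \<sigma>) = t then 1 else 0))"
    unfolding polytabloid_def col_stab_comp[OF sp] tabloid_of_comp[OF sp]
    by (simp add: sum.reindex[OF inj_on_subset[OF inj_conj[OF b] subset_UNIV]])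
  also have "\<dots> = (\<Sum>\<pi>\<in>col_stab \<nu> T. of_int (sign \<pi>) * (if tabloid_of \<nu> T \<circ> inv \<pi> = t \<circ> \<sigma> then 1 else 0))"
  proof (rule sum.cong[OF refl])
    fix \<pi> assume "\<pi> \<in> col_stab \<nu> T"
    then have pp: "\<pi> permutes {1..sum_list \<nu>}" by (simp add: col_stab_def)
    have "tabloid_of \<nu> T \<circ> inv \<sigma> \<circ> inv (\<sigma> \<circ> \<pi> \<circ> inv \<sigma>) = tabloid_of \<nu> T \<circ> inv \<pi> \<circ> inv \<sigma>"
      unfolding inv_conj[OF b permutes_bij[OF pp]]
      by (simp add: comp_assoc, simp add: comp_assoc[symmetric] bij_comp_inv_cancel[OF b])
    then show "of_int (sign (\<sigma> \<circ> \<pi> \<circ> inv \<sigma>)) *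
      (if tabloid_of \<nu> T \<circ> inv \<sigma> \<circ> inv (\<sigma> \<circ> \<pi> \<circ> inv \<sigma>) = t then 1 else 0) =
      of_int (sign \<pi>) * (if tabloid_of \<nu> T \<circ> inv \<pi> = t \<circ> \<sigma> then (1::complex) else 0)"
      using sign_conj[OF ps permutes_interval_permutation[OF pp]]
        comp_inv_eq_iff[OF b, of "tabloid_of \<nu> T \<circ> inv \<pi>" t] by simp
  qed
  also have "\<dots> = perm_act \<sigma> (polytabloid \<nu> T) t"
    by (simp add: perm_act_def polytabloid_def)
  finally show "perm_act \<sigma> (polytabloid \<nu> T) t = polytabloid \<nu> (\<sigma> \<circ> T) t" by simp
qed

lemma tableaux_comp:
  assumes sp: "\<sigma> permutes {1..sum_list \<nu>}" and T: "T \<in> tableaux \<nu>"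
  shows "\<sigma> \<circ> T \<in> tableaux \<nu>"
proof -
  have "bij_betw (\<sigma> \<circ> T) (young \<nu>) {1..sum_list \<nu>}"
    using bij_betw_trans[of T "young \<nu>" "{1..sum_list \<nu>}" \<sigma>] T permutes_imp_bij[OF sp]
    by (simp add: tableaux_def)
  moreover have "\<sigma> 0 = 0" using permutes_not_in[OF sp] by simp
  ultimately show ?thesis using T by (simp add: tableaux_def)
qed

lemma tableaux_comp_image:
  assumes sp: "\<sigma> permutes {1..sum_list \<nu>}"
  shows "(\<lambda>T. \<sigma> \<circ> T) ` tableaux \<nu> = tableaux \<nu>"
proof
  show "(\<lambda>T. \<sigma> \<circ> T) ` tableaux \<nu> \<subseteq> tableaux \<nu>" using tableaux_comp[OF sp] by blast
  show "tableaux \<nu> \<subseteq> (\<lambda>T. \<sigma> \<circ> T) ` tableaux \<nu>"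
  proof
    fix T assume "T \<in> tableaux \<nu>"
    moreover have "T = \<sigma> \<circ> (inv \<sigma> \<circ> T)" using permutes_inv_o(1)[OF sp] by (simp add: o_assoc)
    ultimately show "T \<in> (\<lambda>T. \<sigma> \<circ> T) ` tableaux \<nu>"
      using tableaux_comp[OF permutes_inv[OF sp]] by blast
  qed
qed

lemma finite_young: "finite (young \<nu>)"
proof (rule finite_subset)
  show "young \<nu> \<subseteq> {..<length \<nu>} \<times> {..<Suc (sum_list \<nu>)}"
    using elem_le_sum_list[of _ \<nu>] by (fastforce simp: young_def)
qed simp

lemma finite_tableaux: "finite (tableaux \<nu>)"
proof -
  have "(\<lambda>T. restrict T (young \<nu>)) ` tableaux \<nu> \<subseteq> PiE (young \<nu>) (\<lambda>_. {1..sum_list \<nu>})"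
    by (auto simp: tableaux_def bij_betw_def)
  then have "finite ((\<lambda>T. restrict T (young \<nu>)) ` tableaux \<nu>)"
    by (rule finite_subset) (simp add: finite_PiE[OF finite_young])
  moreover have "inj_on (\<lambda>T. restrict T (young \<nu>)) (tableaux \<nu>)"
    by (rule inj_onI) (auto simp: tableaux_def restrict_def fun_eq_iff, metis)
  ultimately show ?thesis using finite_imageD by blast
qed

lemma specht_coord_frame:
  obtains bs r where "coord_frame (specht \<nu>) {..<r} bs (\<lambda>i u. coord bs r u i)"
  using span_of_coord_frame[OF finite_tableaux] unfolding specht_def span_of_def by blast

lemma perm_act_specht:
  assumes sp: "\<sigma> permutes {1..sum_list \<nu>}" and u: "u \<in> specht \<nu>"
  shows "perm_act \<sigma> u \<in> specht \<nu>"
proof -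
  obtain c where u: "u = (\<lambda>t. \<Sum>T\<in>tableaux \<nu>. c T * polytabloid \<nu> T t)"
    using u by (auto simp: specht_def)
  have inj: "inj_on (\<lambda>T. \<sigma> \<circ> T) (tableaux \<nu>)"
    by (rule inj_on_inverseI[where g = "\<lambda>T. inv \<sigma> \<circ> T"])
      (simp add: comp_assoc[symmetric] permutes_inv_o(2)[OF sp])
  have "perm_act \<sigma> u = (\<lambda>t. \<Sum>T\<in>tableaux \<nu>. c T * polytabloid \<nu> (\<sigma> \<circ> T) t)"
    by (simp add: u perm_act_sum perm_act_polytabloid[OF sp])
  also have "\<dots> = (\<lambda>t. \<Sum>T\<in>tableaux \<nu>. c (inv \<sigma> \<circ> T) * polytabloid \<nu> T t)"
    using sum.reindex[OF inj, of "\<lambda>T. c (inv \<sigma> \<circ> T) * polytabloid \<nu> T _"]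
    by (simp add: tableaux_comp_image[OF sp] comp_assoc[symmetric] permutes_inv_o(2)[OF sp])
  finally show ?thesis unfolding specht_def by (intro CollectI exI[of _ "\<lambda>T. c (inv \<sigma> \<circ> T)"]) simp
qed

lemma perm_act_linear_map:
  assumes sp: "\<sigma> permutes {1..sum_list \<nu>}"
  shows "linear_map_on (specht \<nu>) (perm_act \<sigma>)"
  unfolding linear_map_on_def using perm_act_specht[OF sp] by (auto simp: perm_act_def)

theorem chi_S_conj:
  assumes tp: "\<tau> permutes {1..sum_list \<nu>}" and gp: "\<gamma> permutes {1..sum_list \<nu>}"
  shows "chi_S \<nu> (\<tau> \<circ> \<gamma> \<circ> inv \<tau>) = chi_S \<nu> \<gamma>"
proof -
  obtain bs r where F: "coord_frame (specht \<nu>) {..<r} bs (\<lambda>i u. coord bs r u i)"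
    by (rule specht_coord_frame)
  have itp: "inv \<tau> permutes {1..sum_list \<nu>}" by (rule permutes_inv[OF tp])
  have "perm_act (\<tau> \<circ> \<gamma> \<circ> inv \<tau>) = (\<lambda>u. perm_act \<tau> (perm_act \<gamma> (perm_act (inv \<tau>) u)))"
    by (simp add: perm_act_comp comp_assoc)
  moreover have "perm_act (inv \<tau>) (perm_act \<tau> u) = u" "perm_act \<tau> (perm_act (inv \<tau>) u) = u" for u
    by (simp_all add: perm_act_comp permutes_inv_o[OF tp] perm_act_id)
  ultimately show ?thesis
    unfolding chi_S_def using trace_on_conj[OF F perm_act_linear_map[OF gp]
      perm_act_linear_map[OF tp] perm_act_linear_map[OF itp]] by simp
qed

section \<open>Stacking with permutation diagrams\<close>

definition level_rel :: "nat \<Rightarrow> diagram \<Rightarrow> ((nat \<times> nat) \<times> (nat \<times> nat)) set" where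
  "level_rel l D = {(x, y). \<exists>B\<in>D. x \<in> lift l ` B \<and> y \<in> lift l ` B}"

lemma stack_rel_level_rel: "stack_rel ds = (\<Union>l<length ds. level_rel l (ds ! l))"
  by (auto simp: stack_rel_def level_rel_def)

lemma stack_rel_sym: "sym (stack_rel ds)"
  by (auto simp: stack_rel_def sym_def)

lemma stack_rel_two: "stack_rel [a, b] = level_rel 0 a \<union> level_rel 1 b"
  unfolding stack_rel_level_rel by (simp add: lessThan_Suc Un_ac)

lemma stack_rel_three: "stack_rel [a, b, c] = level_rel 0 a \<union> level_rel 1 b \<union> level_rel 2 c"
  unfolding stack_rel_level_rel by (simp add: lessThan_Suc Un_ac numeral_2_eq_2)

lemma lift_simps [simp]: "lift l (i, False) = (i, l)" "lift l (i, True) = (i, Suc l)"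
  by (simp_all add: lift_def)

lemma level_rel_block: "B \<in> D \<Longrightarrow> u \<in> B \<Longrightarrow> v \<in> B \<Longrightarrow> (lift l u, lift l v) \<in> level_rel l D"
  by (auto simp: level_rel_def)

lemma perm_diagram_image: "perm_diagram k \<sigma> = (\<lambda>j. {(\<sigma> j, False), (j, True)}) ` {1..k}"
  by (auto simp: perm_diagram_def)

lemma transp_perm_diagram: "transp (perm_diagram k \<sigma>) = (\<lambda>j. {(\<sigma> j, True), (j, False)}) ` {1..k}"
  unfolding transp_def perm_diagram_image image_image by simp

lemma level_rel_perm_diagram:
  "(x, y) \<in> level_rel l (perm_diagram k \<sigma>) \<longleftrightarrow>
     (\<exists>j\<in>{1..k}. x \<in> {(\<sigma> j, l), (j, Suc l)} \<and> y \<in> {(\<sigma> j, l), (j, Suc l)})"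
  by (simp add: level_rel_def perm_diagram_image)

lemma level_rel_transp_perm_diagram:
  "(x, y) \<in> level_rel l (transp (perm_diagram k \<sigma>)) \<longleftrightarrow>
     (\<exists>j\<in>{1..k}. x \<in> {(j, l), (\<sigma> j, Suc l)} \<and> y \<in> {(j, l), (\<sigma> j, Suc l)})"
  by (simp add: level_rel_def transp_perm_diagram insert_commute)

lemma partition_verts_block: "partition_on (verts k) w \<Longrightarrow> i \<in> {1..k} \<Longrightarrow> \<exists>B\<in>w. (i, b) \<in> B"
  using partition_onD1[of "verts k" w] by (auto simp: verts_def)

lemma partition_verts_mem: "partition_on (verts k) w \<Longrightarrow> B \<in> w \<Longrightarrow> (i, b) \<in> B \<Longrightarrow> i \<in> {1..k}"
  using partition_onD1[of "verts k" w] unfolding verts_def by blast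

lemma partition_on_block_eq: "partition_on A w \<Longrightarrow> B \<in> w \<Longrightarrow> B' \<in> w \<Longrightarrow> x \<in> B \<Longrightarrow> x \<in> B' \<Longrightarrow> B = B'"
  using partition_onD2[of A w] by (auto simp: disjoint_def)

lemma partition_on_block_ne: "partition_on A w \<Longrightarrow> B \<in> w \<Longrightarrow> B \<noteq> {}"
  using partition_onD3[of A w] by auto

text \<open>Sufficient conditions for the sets \<open>C B\<close> to be the connected components of \<open>R\<close>: \<open>retract\<close>
  witnesses that they are disjoint, the anchors \<open>A B\<close> that each of them is connected.\<close>

locale component_system =
  fixes R :: "('a \<times> 'a) set" and V :: "'v set" and W :: "'v set set"
    and C :: "'v set \<Rightarrow> 'a set" and A :: "'v set \<Rightarrow> 'a set" and retract :: "'a \<Rightarrow> 'v"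
  assumes sym: "sym R"
    and partition: "partition_on V W"
    and retract: "\<And>B z. B \<in> W \<Longrightarrow> z \<in> C B \<Longrightarrow> retract z \<in> B"
    and edge: "\<And>x y. (x, y) \<in> R \<Longrightarrow> \<exists>B\<in>W. x \<in> C B \<and> y \<in> C B"
    and anchor_sub: "\<And>B. B \<in> W \<Longrightarrow> A B \<subseteq> C B"
    and anchor_ne: "\<And>B. B \<in> W \<Longrightarrow> A B \<noteq> {}"
    and anchor_rel: "\<And>B x y. B \<in> W \<Longrightarrow> x \<in> A B \<Longrightarrow> y \<in> A B \<Longrightarrow> (x, y) \<in> R"
    and anchor_reach: "\<And>B z. B \<in> W \<Longrightarrow> z \<in> C B \<Longrightarrow> \<exists>a\<in>A B. (z, a) \<in> R"
begin

lemma disjoint: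
  assumes "B \<in> W" "B' \<in> W" "z \<in> C B" "z \<in> C B'" shows "B = B'"
  using partition_on_block_eq[OF partition assms(1,2) retract[OF assms(1,3)] retract[OF assms(2,4)]] .

lemma closed: "(x, y) \<in> R\<^sup>* \<Longrightarrow> B \<in> W \<Longrightarrow> x \<in> C B \<Longrightarrow> y \<in> C B"
proof (induction rule: rtrancl_induct)
  case (step y z)
  then obtain B' where "B' \<in> W" "y \<in> C B'" "z \<in> C B'" using edge by blast
  with step show ?case using disjoint by metis
qed

lemma connected:
  assumes B: "B \<in> W" and "x \<in> C B" "y \<in> C B" shows "(x, y) \<in> R\<^sup>+"
proof -
  obtain a a' where a: "a \<in> A B" "(x, a) \<in> R" and a': "a' \<in> A B" "(y, a') \<in> R"
    using anchor_reach B assms by metis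
  have "(a', y) \<in> R" using symD[OF sym a'(2)] .
  moreover have "(x, a') \<in> R\<^sup>+"
    using trancl_into_trancl[OF r_into_trancl[OF a(2)] anchor_rel[OF B a(1) a'(1)]] .
  ultimately show ?thesis by (rule trancl_into_trancl[rotated])
qed

lemma comps_eq: "{R\<^sup>+ `` {x} | x. x \<in> Domain R} = C ` W"
proof -
  have cls: "R\<^sup>+ `` {x} = C B" if "B \<in> W" "x \<in> C B" for x B
  proof
    show "R\<^sup>+ `` {x} \<subseteq> C B" using closed[OF trancl_into_rtrancl] that by blast
    show "C B \<subseteq> R\<^sup>+ `` {x}" using connected[OF that(1,2)] by blast
  qed
  have dom: "x \<in> Domain R \<longleftrightarrow> (\<exists>B\<in>W. x \<in> C B)" for x
  proof
    assume "x \<in> Domain R"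
    then obtain y where "(x, y) \<in> R" by blast
    then show "\<exists>B\<in>W. x \<in> C B" using edge by blast
  next
    assume "\<exists>B\<in>W. x \<in> C B"
    then show "x \<in> Domain R" using anchor_reach by blast
  qed
  show ?thesis
  proof (intro set_eqI iffI)
    fix X assume "X \<in> {R\<^sup>+ `` {x} | x. x \<in> Domain R}"
    then obtain x B where "X = R\<^sup>+ `` {x}" "B \<in> W" "x \<in> C B" using dom by blast
    then show "X \<in> C ` W" using cls by blast
  next
    fix X assume "X \<in> C ` W"
    then obtain B where B: "B \<in> W" "X = C B" by blast
    obtain a where "a \<in> A B" using anchor_ne[OF B(1)] by blast
    then have "a \<in> C B" using anchor_sub[OF B(1)] by blast
    then have "a \<in> Domain R" "X = R\<^sup>+ `` {a}" using dom cls B by blast+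
    then show "X \<in> {R\<^sup>+ `` {x} | x. x \<in> Domain R}" by blast
  qed
qed

end

lemma stack_eqI:
  assumes comps: "comps ds = C ` W"
    and outer: "\<And>B. B \<in> W \<Longrightarrow> unembed (length ds) ` (C B \<inter> outer (length ds)) = G B"
    and ne: "\<And>B. B \<in> W \<Longrightarrow> G B \<noteq> {}"
  shows "stack ds = G ` W" "ell ds = 0"
proof -
  have meets: "C B \<inter> outer (length ds) \<noteq> {}" if "B \<in> W" for B
    using outer[OF that] ne[OF that] by auto
  have "stack ds = {unembed (length ds) ` (C B \<inter> outer (length ds)) | B. B \<in> W}"
    unfolding stack_def comps using meets by blast
  also have "\<dots> = G ` W" using outer by auto
  finally show "stack ds = G ` W" .
  have "{X \<in> comps ds. X \<inter> outer (length ds) = {}} = {}" unfolding comps using meets by blast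
  then show "ell ds = 0" unfolding ell_def by (simp only: card.empty)
qed

definition top_component :: "(nat \<Rightarrow> nat) \<Rightarrow> vtx set \<Rightarrow> (nat \<times> nat) set" where
  "top_component \<sigma> B = lift 1 ` B \<union> (\<lambda>i. (\<sigma> i, 0)) ` {i. (i, False) \<in> B}"

definition top_retract :: "(nat \<Rightarrow> nat) \<Rightarrow> nat \<times> nat \<Rightarrow> vtx" where
  "top_retract \<sigma> z = (if snd z = 0 then (inv \<sigma> (fst z), False) else (fst z, snd z = 2))"

lemma component_system_top:
  assumes sp: "\<sigma> permutes {1..k}" and w: "partition_on (verts k) w"
  shows "component_system (stack_rel [perm_diagram k \<sigma>, w]) (verts k) w
    (top_component \<sigma>) (\<lambda>B. lift 1 ` B) (top_retract \<sigma>)"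
proof
  show "top_retract \<sigma> z \<in> B" if "B \<in> w" "z \<in> top_component \<sigma> B" for B z
    using that permutes_inverses(2)[OF sp]
    by (auto simp: top_component_def top_retract_def lift_def split: if_splits)
  show "\<exists>B\<in>w. x \<in> top_component \<sigma> B \<and> y \<in> top_component \<sigma> B"
    if "(x, y) \<in> stack_rel [perm_diagram k \<sigma>, w]" for x y
  proof (cases "(x, y) \<in> level_rel 0 (perm_diagram k \<sigma>)")
    case True
    then obtain j where j: "j \<in> {1..k}" "x \<in> {(\<sigma> j, 0), (j, 1)}" "y \<in> {(\<sigma> j, 0), (j, 1)}"
      by (auto simp: level_rel_perm_diagram)
    moreover obtain B where "B \<in> w" "(j, False) \<in> B" using partition_verts_block[OF w j(1)] by blast
    moreover have "(j, 1) = lift 1 (j, False)" by simp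
    ultimately show ?thesis unfolding top_component_def by blast
  next
    case False
    then show ?thesis using that
      by (auto simp: stack_rel_two level_rel_def top_component_def)
  qed
  show "\<exists>a\<in>lift 1 ` B. (z, a) \<in> stack_rel [perm_diagram k \<sigma>, w]"
    if B: "B \<in> w" "z \<in> top_component \<sigma> B" for B z
  proof (cases "z \<in> lift 1 ` B")
    case True
    then show ?thesis using B(1) level_rel_block[OF B(1)] by (force simp: stack_rel_two)
  next
    case False
    then obtain i where "(i, False) \<in> B" "z = (\<sigma> i, 0)" using B(2) by (auto simp: top_component_def)
    moreover have "i \<in> {1..k}" using partition_verts_mem[OF w B(1) calculation(1)] .
    moreover have "(i, 1) \<in> lift 1 ` B" using calculation(1) by (force simp: image_iff)
    ultimately show ?thesis by (intro bexI[of _ "(i, 1)"]) (auto simp: stack_rel_two level_rel_perm_diagram)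
  qed
  show "(x, y) \<in> stack_rel [perm_diagram k \<sigma>, w]" if "B \<in> w" "x \<in> lift 1 ` B" "y \<in> lift 1 ` B" for B x y
    using that by (auto simp: stack_rel_two level_rel_def)
qed (use w partition_on_block_ne[OF w] in \<open>auto simp: stack_rel_sym top_component_def\<close>)

definition bottom_component :: "(nat \<Rightarrow> nat) \<Rightarrow> vtx set \<Rightarrow> (nat \<times> nat) set" where
  "bottom_component \<sigma> B = lift 0 ` B \<union> (\<lambda>i. (\<sigma> i, 2)) ` {i. (i, True) \<in> B}"

definition bottom_retract :: "(nat \<Rightarrow> nat) \<Rightarrow> nat \<times> nat \<Rightarrow> vtx" where
  "bottom_retract \<sigma> z = (if snd z = 2 then (inv \<sigma> (fst z), True) else (fst z, snd z = 1))"

lemma component_system_bottom: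
  assumes sp: "\<sigma> permutes {1..k}" and w: "partition_on (verts k) w"
  shows "component_system (stack_rel [w, transp (perm_diagram k \<sigma>)]) (verts k) w
    (bottom_component \<sigma>) (\<lambda>B. lift 0 ` B) (bottom_retract \<sigma>)"
proof
  show "bottom_retract \<sigma> z \<in> B" if "B \<in> w" "z \<in> bottom_component \<sigma> B" for B z
    using that permutes_inverses(2)[OF sp]
    by (auto simp: bottom_component_def bottom_retract_def lift_def split: if_splits)
  show "\<exists>B\<in>w. x \<in> bottom_component \<sigma> B \<and> y \<in> bottom_component \<sigma> B"
    if "(x, y) \<in> stack_rel [w, transp (perm_diagram k \<sigma>)]" for x y
  proof (cases "(x, y) \<in> level_rel 1 (transp (perm_diagram k \<sigma>))")
    case True
    then obtain j where j: "j \<in> {1..k}" "x \<in> {(j, 1), (\<sigma> j, 2)}" "y \<in> {(j, 1), (\<sigma> j, 2)}"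
      by (auto simp: level_rel_transp_perm_diagram numeral_2_eq_2)
    moreover obtain B where "B \<in> w" "(j, True) \<in> B" using partition_verts_block[OF w j(1)] by blast
    moreover have "(j, 1) = lift 0 (j, True)" by simp
    ultimately show ?thesis unfolding bottom_component_def by blast
  next
    case False
    then show ?thesis using that
      by (auto simp: stack_rel_two level_rel_def bottom_component_def)
  qed
  show "\<exists>a\<in>lift 0 ` B. (z, a) \<in> stack_rel [w, transp (perm_diagram k \<sigma>)]"
    if B: "B \<in> w" "z \<in> bottom_component \<sigma> B" for B z
  proof (cases "z \<in> lift 0 ` B")
    case True
    then show ?thesis using B(1) level_rel_block[OF B(1)] by (force simp: stack_rel_two)
  next
    case False
    then obtain i where "(i, True) \<in> B" "z = (\<sigma> i, 2)" using B(2) by (auto simp: bottom_component_def)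
    moreover have "i \<in> {1..k}" using partition_verts_mem[OF w B(1) calculation(1)] .
    moreover have "(i, 1) \<in> lift 0 ` B" using calculation(1) by (force simp: image_iff)
    ultimately show ?thesis
      by (intro bexI[of _ "(i, 1)"])
        (auto simp: stack_rel_two level_rel_transp_perm_diagram numeral_2_eq_2)
  qed
  show "(x, y) \<in> stack_rel [w, transp (perm_diagram k \<sigma>)]"
    if "B \<in> w" "x \<in> lift 0 ` B" "y \<in> lift 0 ` B" for B x y
    using that by (auto simp: stack_rel_two level_rel_def)
qed (use w partition_on_block_ne[OF w] in \<open>auto simp: stack_rel_sym bottom_component_def\<close>)

definition conj_component :: "(nat \<Rightarrow> nat) \<Rightarrow> vtx set \<Rightarrow> (nat \<times> nat) set" where
  "conj_component \<sigma> B = lift 1 ` B \<union> (\<lambda>i. (\<sigma> i, 0)) ` {i. (i, False) \<in> B}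
     \<union> (\<lambda>i. (\<sigma> i, 3)) ` {i. (i, True) \<in> B}"

definition conj_retract :: "(nat \<Rightarrow> nat) \<Rightarrow> nat \<times> nat \<Rightarrow> vtx" where
  "conj_retract \<sigma> z = (if snd z = 0 then (inv \<sigma> (fst z), False)
     else if snd z = 3 then (inv \<sigma> (fst z), True) else (fst z, snd z = 2))"

lemma conj_stack_edge:
  assumes w: "partition_on (verts k) w"
    and xy: "(x, y) \<in> stack_rel [perm_diagram k \<sigma>, w, transp (perm_diagram k \<sigma>)]"
  shows "\<exists>B\<in>w. x \<in> conj_component \<sigma> B \<and> y \<in> conj_component \<sigma> B"
proof -
  consider "(x, y) \<in> level_rel 0 (perm_diagram k \<sigma>)" | "(x, y) \<in> level_rel 1 w"
    | "(x, y) \<in> level_rel 2 (transp (perm_diagram k \<sigma>))"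
    using xy by (auto simp: stack_rel_three)
  then show ?thesis
  proof cases
    case 1
    then obtain j where j: "j \<in> {1..k}" "x \<in> {(\<sigma> j, 0), (j, 1)}" "y \<in> {(\<sigma> j, 0), (j, 1)}"
      by (auto simp: level_rel_perm_diagram)
    moreover obtain B where "B \<in> w" "(j, False) \<in> B" using partition_verts_block[OF w j(1)] by blast
    moreover have "(j, 1) = lift 1 (j, False)" by simp
    ultimately show ?thesis unfolding conj_component_def by blast
  next
    case 2
    then show ?thesis by (auto simp: level_rel_def conj_component_def)
  next
    case 3
    then obtain j where j: "j \<in> {1..k}" "x \<in> {(j, 2), (\<sigma> j, 3)}" "y \<in> {(j, 2), (\<sigma> j, 3)}"
      by (auto simp: level_rel_transp_perm_diagram numeral_3_eq_3)
    moreover obtain B where "B \<in> w" "(j, True) \<in> B" using partition_verts_block[OF w j(1)] by blast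
    moreover have "(j, 2) = lift 1 (j, True)" by simp
    ultimately show ?thesis unfolding conj_component_def by blast
  qed
qed

lemma conj_stack_reach_anchor:
  assumes w: "partition_on (verts k) w" and B: "B \<in> w" "z \<in> conj_component \<sigma> B"
  shows "\<exists>a\<in>lift 1 ` B. (z, a) \<in> stack_rel [perm_diagram k \<sigma>, w, transp (perm_diagram k \<sigma>)]"
proof -
  consider "z \<in> lift 1 ` B" | i where "(i, False) \<in> B" "z = (\<sigma> i, 0)"
    | i where "(i, True) \<in> B" "z = (\<sigma> i, 3)"
    using B(2) by (auto simp: conj_component_def)
  then show ?thesis
  proof cases
    case 1
    then show ?thesis using B(1) level_rel_block[OF B(1)] by (force simp: stack_rel_three)
  next
    case (2 i)
    moreover have "i \<in> {1..k}" using partition_verts_mem[OF w B(1) 2(1)] .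
    moreover have "(i, 1) \<in> lift 1 ` B" using 2(1) by (force simp: image_iff)
    ultimately show ?thesis
      by (intro bexI[of _ "(i, 1)"]) (auto simp: stack_rel_three level_rel_perm_diagram)
  next
    case (3 i)
    moreover have "i \<in> {1..k}" using partition_verts_mem[OF w B(1) 3(1)] .
    moreover have "(i, 2) \<in> lift 1 ` B" using 3(1) by (force simp: image_iff)
    ultimately show ?thesis
      by (intro bexI[of _ "(i, 2)"])
        (auto simp: stack_rel_three level_rel_transp_perm_diagram numeral_3_eq_3)
  qed
qed

lemma component_system_conj:
  assumes sp: "\<sigma> permutes {1..k}" and w: "partition_on (verts k) w"
  shows "component_system (stack_rel [perm_diagram k \<sigma>, w, transp (perm_diagram k \<sigma>)]) (verts k) w
    (conj_component \<sigma>) (\<lambda>B. lift 1 ` B) (conj_retract \<sigma>)"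
proof
  show "conj_retract \<sigma> z \<in> B" if "B \<in> w" "z \<in> conj_component \<sigma> B" for B z
    using that permutes_inverses(2)[OF sp]
    by (auto simp: conj_component_def conj_retract_def lift_def split: if_splits)
  show "(x, y) \<in> stack_rel [perm_diagram k \<sigma>, w, transp (perm_diagram k \<sigma>)]"
    if "B \<in> w" "x \<in> lift 1 ` B" "y \<in> lift 1 ` B" for B x y
    using that by (auto simp: stack_rel_three level_rel_def)
qed (use w partition_on_block_ne[OF w] conj_stack_edge[OF w] conj_stack_reach_anchor[OF w] in
    \<open>auto simp: stack_rel_sym conj_component_def\<close>)

definition relabel_top :: "(nat \<Rightarrow> nat) \<Rightarrow> vtx \<Rightarrow> vtx" where
  "relabel_top \<sigma> v = (if snd v then v else (\<sigma> (fst v), False))"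

definition relabel_bottom :: "(nat \<Rightarrow> nat) \<Rightarrow> vtx \<Rightarrow> vtx" where
  "relabel_bottom \<sigma> v = (if snd v then (\<sigma> (fst v), True) else v)"

definition relabel :: "(nat \<Rightarrow> nat) \<Rightarrow> vtx \<Rightarrow> vtx" where
  "relabel \<sigma> v = (\<sigma> (fst v), snd v)"

definition relabel_diagram :: "(nat \<Rightarrow> nat) \<Rightarrow> diagram \<Rightarrow> diagram" where
  "relabel_diagram \<sigma> w = (\<lambda>B. relabel \<sigma> ` B) ` w"

lemma unembed_top_component: "unembed 2 ` (top_component \<sigma> B \<inter> outer 2) = relabel_top \<sigma> ` B"
  by (force simp: top_component_def relabel_top_def unembed_def outer_def lift_def image_iff
      split: if_splits)

lemma unembed_bottom_component: "unembed 2 ` (bottom_component \<sigma> B \<inter> outer 2) = relabel_bottom \<sigma> ` B"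
  by (force simp: bottom_component_def relabel_bottom_def unembed_def outer_def lift_def image_iff
      split: if_splits)

lemma perm_diagram_comp:
  assumes sp: "\<sigma> permutes {1..k}" and w: "partition_on (verts k) w"
  shows "perm_diagram k \<sigma> \<circ>\<^sub>d w = (\<lambda>B. relabel_top \<sigma> ` B) ` w" "ell [perm_diagram k \<sigma>, w] = 0"
proof -
  interpret component_system "stack_rel [perm_diagram k \<sigma>, w]" "verts k" w
    "top_component \<sigma>" "\<lambda>B. lift 1 ` B" "top_retract \<sigma>"
    by (rule component_system_top[OF sp w])
  have "comps [perm_diagram k \<sigma>, w] = top_component \<sigma> ` w" using comps_eq by (simp add: comps_def)
  from stack_eqI[OF this] show "perm_diagram k \<sigma> \<circ>\<^sub>d w = (\<lambda>B. relabel_top \<sigma> ` B) ` w"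
      "ell [perm_diagram k \<sigma>, w] = 0"
    using unembed_top_component partition_on_block_ne[OF w] by (simp_all add: comp_def numeral_2_eq_2)
qed

lemma comp_transp_perm_diagram:
  assumes sp: "\<sigma> permutes {1..k}" and w: "partition_on (verts k) w"
  shows "w \<circ>\<^sub>d transp (perm_diagram k \<sigma>) = (\<lambda>B. relabel_bottom \<sigma> ` B) ` w"
proof -
  interpret component_system "stack_rel [w, transp (perm_diagram k \<sigma>)]" "verts k" w
    "bottom_component \<sigma>" "\<lambda>B. lift 0 ` B" "bottom_retract \<sigma>"
    by (rule component_system_bottom[OF sp w])
  have "comps [w, transp (perm_diagram k \<sigma>)] = bottom_component \<sigma> ` w"
    using comps_eq by (simp add: comps_def)
  from stack_eqI(1)[OF this] show ?thesis
    using unembed_bottom_component partition_on_block_ne[OF w] by (simp add: comp_def numeral_2_eq_2)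
qed

lemma inj_relabel_top: "\<sigma> permutes S \<Longrightarrow> inj (relabel_top \<sigma>)"
  by (auto simp: inj_def relabel_top_def permutes_inj[THEN injD] split: if_splits)

lemma inj_relabel: "\<sigma> permutes S \<Longrightarrow> inj (relabel \<sigma>)"
  by (auto simp: inj_def relabel_def permutes_inj[THEN injD])

lemma finite_verts: "finite (verts k)"
  by (simp add: verts_def)

lemma relabel_top_verts:
  assumes sp: "\<sigma> permutes {1..k}" shows "relabel_top \<sigma> ` verts k = verts k"
proof (rule endo_inj_surj[OF finite_verts])
  show "relabel_top \<sigma> ` verts k \<subseteq> verts k"
  proof
    fix v assume "v \<in> relabel_top \<sigma> ` verts k"
    then obtain i b where "i \<in> {1..k}" "v = relabel_top \<sigma> (i, b)" by (auto simp: verts_def)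
    then show "v \<in> verts k"
      using permutes_in_image[OF sp, of i] by (cases b) (auto simp: verts_def relabel_top_def)
  qed
  show "inj_on (relabel_top \<sigma>) (verts k)" using inj_relabel_top[OF sp] by (rule inj_on_subset) simp
qed

lemma relabel_verts:
  assumes sp: "\<sigma> permutes {1..k}" shows "relabel \<sigma> ` verts k = verts k"
proof (rule endo_inj_surj[OF finite_verts])
  show "relabel \<sigma> ` verts k \<subseteq> verts k"
  proof
    fix v assume "v \<in> relabel \<sigma> ` verts k"
    then obtain i b where "i \<in> {1..k}" "v = relabel \<sigma> (i, b)" by (auto simp: verts_def)
    then show "v \<in> verts k"
      using permutes_in_image[OF sp, of i] by (cases b) (auto simp: verts_def relabel_def)
  qed
  show "inj_on (relabel \<sigma>) (verts k)" using inj_relabel[OF sp] by (rule inj_on_subset) simp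
qed

lemma partition_on_image_blocks:
  assumes w: "partition_on V w" and g: "inj g"
  shows "partition_on (g ` V) ((\<lambda>B. g ` B) ` w)"
proof -
  have "partition_on (g ` V) ((`) g ` w - {{}})"
    by (rule partition_on_inj_image[OF w]) (use g in \<open>auto simp: inj_on_def inj_def\<close>)
  moreover have "(`) g ` w - {{}} = (\<lambda>B. g ` B) ` w" using partition_on_block_ne[OF w] by auto
  ultimately show ?thesis by simp
qed

lemma partition_relabel_diagram:
  "\<sigma> permutes {1..k} \<Longrightarrow> partition_on (verts k) w \<Longrightarrow> partition_on (verts k) (relabel_diagram \<sigma> w)"
  using partition_on_image_blocks[OF _ inj_relabel, of "verts k" w \<sigma> "{1..k}"] relabel_verts[of \<sigma> k]
  unfolding relabel_diagram_def by simp

theorem conj_perm_diagram: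
  assumes sp: "\<sigma> permutes {1..k}" and w: "partition_on (verts k) w"
  shows "perm_diagram k \<sigma> \<circ>\<^sub>d w \<circ>\<^sub>d transp (perm_diagram k \<sigma>) = relabel_diagram \<sigma> w"
proof -
  have "partition_on (verts k) ((\<lambda>B. relabel_top \<sigma> ` B) ` w)"
    using partition_on_image_blocks[OF w inj_relabel_top[OF sp]] relabel_top_verts[OF sp] by simp
  from comp_transp_perm_diagram[OF sp this]
  have "perm_diagram k \<sigma> \<circ>\<^sub>d w \<circ>\<^sub>d transp (perm_diagram k \<sigma>) =
      (\<lambda>B. relabel_bottom \<sigma> ` B) ` (\<lambda>B. relabel_top \<sigma> ` B) ` w"
    by (simp add: perm_diagram_comp(1)[OF sp w])
  also have "\<dots> = relabel_diagram \<sigma> w"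
  proof -
    have "relabel_bottom \<sigma> (relabel_top \<sigma> v) = relabel \<sigma> v" for v
      by (simp add: relabel_bottom_def relabel_top_def relabel_def)
    then show ?thesis by (simp add: relabel_diagram_def image_image)
  qed
  finally show ?thesis .
qed

section \<open>Symmetric diagrams fixed by a permutation diagram\<close>

lemma strict_mono_permutes_id:
  fixes \<sigma> :: "nat \<Rightarrow> nat"
  assumes sp: "\<sigma> permutes {1..k}" and mono: "\<forall>a\<in>{1..k}. \<forall>b\<in>{1..k}. a < b \<longrightarrow> \<sigma> a < \<sigma> b"
  shows "\<sigma> = id"
proof -
  have inr: "\<sigma> j \<in> {1..k}" if "j \<in> {1..k}" for j using permutes_in_image[OF sp] that by blast
  have ge: "j \<in> {1..k} \<Longrightarrow> j \<le> \<sigma> j" for j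
  proof (induction j)
    case (Suc j)
    show ?case
    proof (cases "j = 0")
      case True then show ?thesis using inr[OF Suc.prems] by simp
    next
      case False
      then have j: "j \<in> {1..k}" using Suc.prems by auto
      then have "\<sigma> j < \<sigma> (Suc j)" using mono Suc.prems by auto
      then show ?thesis using Suc.IH[OF j] by simp
    qed
  qed simp
  have le: "k - n \<in> {1..k} \<Longrightarrow> \<sigma> (k - n) \<le> k - n" for n
  proof (induction n)
    case 0 then show ?case using inr[of k] by auto
  next
    case (Suc n)
    have a: "k - n \<in> {1..k}" using Suc.prems by auto
    have "k - Suc n < k - n" using Suc.prems by auto
    then have "\<sigma> (k - Suc n) < \<sigma> (k - n)" using mono a Suc.prems by blast
    then show ?case using Suc.IH[OF a] Suc.prems by auto
  qed
  show ?thesis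
  proof
    fix j show "\<sigma> j = id j"
    proof (cases "j \<in> {1..k}")
      case True
      then show ?thesis using ge[OF True] le[of "k - j"] by auto
    next
      case False then show ?thesis using permutes_not_in[OF sp] by simp
    qed
  qed
qed

text \<open>Two crossing strands \<open>{\<sigma> b, b'}\<close> and \<open>{\<sigma> a, a'}\<close> witness non-planarity whenever \<open>\<sigma>\<close>
  reverses a pair \<open>a < b\<close>.\<close>

lemma planar_perm_diagram_id:
  assumes sp: "\<sigma> permutes {1..k}" and pl: "planar k (perm_diagram k \<sigma>)"
  shows "\<sigma> = id"
proof (rule strict_mono_permutes_id[OF sp], intro ballI impI)
  fix a b assume a: "a \<in> {1..k}" and b: "b \<in> {1..k}" and ab: "a < b"
  show "\<sigma> a < \<sigma> b"
  proof (rule ccontr)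
    assume "\<not> \<sigma> a < \<sigma> b"
    moreover have "\<sigma> a \<noteq> \<sigma> b" using ab permutes_inj[OF sp] by (auto dest: injD)
    ultimately have lt: "\<sigma> b < \<sigma> a" by simp
    have sa: "\<sigma> a \<le> k" using permutes_in_image[OF sp] a by auto
    define B where "B = {(\<sigma> b, False), (b, True)}"
    define C where "C = {(\<sigma> a, False), (a, True)}"
    have BC: "B \<in> perm_diagram k \<sigma>" "C \<in> perm_diagram k \<sigma>" "B \<noteq> C"
      using a b ab by (auto simp: B_def C_def perm_diagram_def)
    have "pos k (\<sigma> b, False) < pos k (\<sigma> a, False)" "pos k (\<sigma> a, False) < pos k (b, True)"
      "pos k (b, True) < pos k (a, True)" using lt sa ab b by (auto simp: pos_def)
    then have "\<exists>x\<in>B. \<exists>z\<in>B. \<exists>y\<in>C. \<exists>e\<in>C. pos k x < pos k y \<and> pos k y < pos k z \<and> pos k z < pos k e"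
      unfolding B_def C_def
      by (intro bexI[of _ "(\<sigma> b, False)"] bexI[of _ "(b, True)"] bexI[of _ "(\<sigma> a, False)"]
          bexI[of _ "(a, True)"] conjI) auto
    then have "\<exists>B\<in>perm_diagram k \<sigma>. \<exists>C\<in>perm_diagram k \<sigma>. B \<noteq> C \<and> (\<exists>x\<in>B. \<exists>z\<in>B. \<exists>y\<in>C. \<exists>e\<in>C.
       pos k x < pos k y \<and> pos k y < pos k z \<and> pos k z < pos k e)"
      using BC by (intro bexI[of _ B] bexI[of _ C] conjI)
    then show False using pl unfolding planar_def by blast
  qed
qed

lemma relabel_id: "relabel_diagram id w = w"
proof -
  have "relabel id = id" by (auto simp: relabel_def)
  then show ?thesis by (simp add: relabel_diagram_def)
qed

lemma relabel_rows: "relabel \<sigma> ` B \<inter> top_row = relabel \<sigma> ` (B \<inter> top_row)"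
  "relabel \<sigma> ` B \<inter> bot_row = relabel \<sigma> ` (B \<inter> bot_row)"
  by (auto simp: top_row_def bot_row_def relabel_def)

lemma prop_blocks_relabel_diagram:
  "prop_blocks (relabel_diagram \<sigma> w) = (\<lambda>B. relabel \<sigma> ` B) ` prop_blocks w"
proof -
  have "(relabel \<sigma> ` B \<inter> top_row \<noteq> {} \<and> relabel \<sigma> ` B \<inter> bot_row \<noteq> {}) \<longleftrightarrow>
      (B \<inter> top_row \<noteq> {} \<and> B \<inter> bot_row \<noteq> {})" for B
    by (simp add: relabel_rows)
  moreover have "{X \<in> (\<lambda>B. relabel \<sigma> ` B) ` w. X \<inter> top_row \<noteq> {} \<and> X \<inter> bot_row \<noteq> {}} =
     (\<lambda>B. relabel \<sigma> ` B) ` {B \<in> w. relabel \<sigma> ` B \<inter> top_row \<noteq> {} \<and> relabel \<sigma> ` B \<inter> bot_row \<noteq> {}}"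
    by blast
  ultimately show ?thesis unfolding prop_blocks_def relabel_diagram_def by simp
qed

lemma inj_on_image_sets: "inj f \<Longrightarrow> inj_on (\<lambda>B. f ` B) X"
  by (auto simp: inj_on_def inj_image_eq_iff)

lemma pn_relabel_diagram: "\<sigma> permutes S \<Longrightarrow> pn (relabel_diagram \<sigma> w) = pn w"
  unfolding pn_def prop_blocks_relabel_diagram by (rule card_image[OF inj_on_image_sets[OF inj_relabel]])

lemma transp_relabel_diagram: "transp (relabel_diagram \<sigma> w) = relabel_diagram \<sigma> (transp w)"
proof -
  have "(\<lambda>v. (fst v, \<not> snd v)) ` relabel \<sigma> ` B = relabel \<sigma> ` (\<lambda>v. (fst v, \<not> snd v)) ` B" for B
    by (simp add: image_image relabel_def)
  then show ?thesis unfolding transp_def relabel_diagram_def image_image by simp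
qed

lemma alg_cond_relabel_diagram:
  assumes sp: "\<sigma> permutes {1..k}" and dA: "alg_cond A k (perm_diagram k \<sigma>)" and w: "alg_cond A k w"
  shows "alg_cond A k (relabel_diagram \<sigma> w)"
proof -
  have card: "card (relabel \<sigma> ` X) = card X" for X
    using card_image[OF inj_on_subset[OF inj_relabel[OF sp] subset_UNIV]] .
  show ?thesis
  proof (cases A)
    case AR then show ?thesis
      using w by (auto simp: relabel_diagram_def rook_blocks_def relabel_rows card)
  next
    case AB then show ?thesis using w by (auto simp: relabel_diagram_def brauer_blocks_def card)
  next
    case ARB then show ?thesis using w by (auto simp: relabel_diagram_def rb_blocks_def card)
  qed (use dA w planar_perm_diagram_id[OF sp] relabel_id in auto)
qed

lemma relabel_diagram_sym_mdiagrams: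
  assumes sp: "\<sigma> permutes {1..k}" and dA: "perm_diagram k \<sigma> \<in> diagrams A k"
    and w: "w \<in> sym_mdiagrams A k m"
  shows "relabel_diagram \<sigma> w \<in> sym_mdiagrams A k m"
proof -
  have "\<forall>B\<in>w. B \<subseteq> top_row \<or> B \<subseteq> bot_row \<or> (\<exists>S. B = S \<times> UNIV)"
    using w by (simp add: sym_mdiagrams_def)
  have "\<forall>B\<in>relabel_diagram \<sigma> w. B \<subseteq> top_row \<or> B \<subseteq> bot_row \<or> (\<exists>S. B = S \<times> UNIV)"
  proof
    fix B' assume "B' \<in> relabel_diagram \<sigma> w"
    then obtain B where B: "B \<in> w" "B' = relabel \<sigma> ` B" by (auto simp: relabel_diagram_def)
    consider "B \<subseteq> top_row" | "B \<subseteq> bot_row" | S where "B = S \<times> UNIV"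
      using \<open>\<forall>B\<in>w. _\<close> B(1) by blast
    then show "B' \<subseteq> top_row \<or> B' \<subseteq> bot_row \<or> (\<exists>S. B' = S \<times> UNIV)"
    proof cases
      case 3
      then have "B' = (\<sigma> ` S) \<times> UNIV" using B(2) by (auto simp: relabel_def image_iff)
      then show ?thesis by blast
    qed (use B(2) in \<open>auto simp: top_row_def bot_row_def relabel_def\<close>)
  qed
  then show ?thesis
    using w dA partition_relabel_diagram[OF sp] alg_cond_relabel_diagram[OF sp]
      transp_relabel_diagram pn_relabel_diagram[OF sp]
    by (simp add: sym_mdiagrams_def diagrams_def)
qed

section \<open>The permutation \<open>\<sigma>\<^sub>d\<^sub>,\<^sub>w\<close> for a permutation diagram \<open>d\<close>\<close>

lemma rank_bij_betw:
  fixes f :: "'a \<Rightarrow> nat"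
  assumes fin: "finite S" and inj: "inj_on f S"
  shows "bij_betw (\<lambda>B. Suc (card {C \<in> S. f C < f B})) S {1..card S}"
proof -
  let ?r = "\<lambda>B. Suc (card {C \<in> S. f C < f B})"
  have lt: "?r B < ?r B'" if B: "B \<in> S" "B' \<in> S" "f B < f B'" for B B'
  proof -
    have "{C \<in> S. f C < f B} \<subset> {C \<in> S. f C < f B'}" using B by auto
    then have "card {C \<in> S. f C < f B} < card {C \<in> S. f C < f B'}"
      by (rule psubset_card_mono[rotated]) (use fin in simp)
    then show ?thesis by simp
  qed
  have i: "inj_on ?r S"
  proof (rule inj_onI)
    fix B B' assume B: "B \<in> S" "B' \<in> S" "?r B = ?r B'"
    show "B = B'"
    proof (rule ccontr)
      assume "B \<noteq> B'"
      then have "f B \<noteq> f B'" using inj B by (auto dest: inj_onD)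
      then have "f B < f B' \<or> f B' < f B" by auto
      then show False using lt[of B B'] lt[of B' B] B by auto
    qed
  qed
  have sub: "?r ` S \<subseteq> {1..card S}"
  proof
    fix x assume "x \<in> ?r ` S"
    then obtain B where B: "B \<in> S" "x = ?r B" by blast
    have "{C \<in> S. f C < f B} \<subseteq> S - {B}" by auto
    then have "card {C \<in> S. f C < f B} \<le> card (S - {B})" by (rule card_mono[rotated]) (use fin in simp)
    also have "\<dots> < card S" using B(1) fin by (rule card_Diff1_less[rotated])
    finally show "x \<in> {1..card S}" using B(2) by simp
  qed
  have "card (?r ` S) = card {1..card S}" using card_image[OF i] by simp
  then have "?r ` S = {1..card S}" using sub by (intro card_subset_eq) auto
  then show ?thesis using i by (simp add: bij_betw_def)
qed

lemma finite_partition_verts: "partition_on (verts k) w \<Longrightarrow> finite w"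
proof -
  assume w: "partition_on (verts k) w"
  have "finite (verts k)" by (simp add: verts_def)
  then have "finite (\<Union>w)" using partition_onD1[OF w] by simp
  then show ?thesis by (rule finite_UnionD)
qed

lemma maxtop_in:
  assumes w: "partition_on (verts k) w" and B: "B \<in> prop_blocks w"
  shows "(maxtop B, False) \<in> B"
proof -
  have Bw: "B \<in> w" and t: "B \<inter> top_row \<noteq> {}" using B by (auto simp: prop_blocks_def)
  have fin: "finite {i. (i, False) \<in> B}"
  proof (rule finite_subset)
    show "{i. (i, False) \<in> B} \<subseteq> {1..k}" using partition_verts_mem[OF w Bw] by blast
  qed simp
  have ne: "{i. (i, False) \<in> B} \<noteq> {}" using t by (auto simp: top_row_def)
  show ?thesis using Max_in[OF fin ne] by (simp add: maxtop_def)
qed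

lemma maxtop_inj:
  assumes w: "partition_on (verts k) w"
  shows "inj_on maxtop (prop_blocks w)"
proof (rule inj_onI)
  fix B B' assume B: "B \<in> prop_blocks w" "B' \<in> prop_blocks w" "maxtop B = maxtop B'"
  have "(maxtop B, False) \<in> B" using maxtop_in[OF w B(1)] .
  moreover have "(maxtop B, False) \<in> B'" using maxtop_in[OF w B(2)] B(3) by simp
  moreover have "B \<in> w" "B' \<in> w" using B by (auto simp: prop_blocks_def)
  ultimately show "B = B'" using partition_on_block_eq[OF w] by metis
qed

lemma pidx_bij:
  assumes w: "partition_on (verts k) w"
  shows "bij_betw (pidx w) (prop_blocks w) {1..pn w}"
proof -
  have "finite (prop_blocks w)" using finite_partition_verts[OF w] by (simp add: prop_blocks_def)
  from rank_bij_betw[OF this maxtop_inj[OF w]] show ?thesis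
    unfolding pidx_def pn_def by (simp add: fun_eq_iff)
qed

lemma relabel_conj_retract_embed:
  assumes "\<sigma> permutes S" shows "relabel \<sigma> (conj_retract \<sigma> (embed 3 y)) = y"
  using permutes_inverses(1)[OF assms] by (cases y) (simp add: relabel_def conj_retract_def embed_def)

lemma embed_relabel_conj_component: "x \<in> P \<Longrightarrow> embed 3 (relabel \<sigma> x) \<in> conj_component \<sigma> P"
  by (cases x) (force simp: embed_def relabel_def conj_component_def split: if_splits)

text \<open>\<open>lift 1\<close> places \<open>w\<close> in the middle of the stack \<open>[d, w, d\<^sup>T]\<close> and \<open>embed 3\<close> reads off its
  outer rows; the block \<open>P\<close> of \<open>w\<close> reaches exactly the block \<open>relabel \<sigma> ` P\<close>.\<close>

lemma conj_stack_path_iff: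
  assumes sp: "\<sigma> permutes {1..k}" and w: "partition_on (verts k) w" and P: "P \<in> w" "x \<in> P"
  shows "(lift 1 x, embed 3 y) \<in> (stack_rel [perm_diagram k \<sigma>, w, transp (perm_diagram k \<sigma>)])\<^sup>*
    \<longleftrightarrow> y \<in> relabel \<sigma> ` P"
proof -
  interpret component_system "stack_rel [perm_diagram k \<sigma>, w, transp (perm_diagram k \<sigma>)]" "verts k" w
    "conj_component \<sigma>" "\<lambda>B. lift 1 ` B" "conj_retract \<sigma>"
    by (rule component_system_conj[OF sp w])
  have x: "lift 1 x \<in> conj_component \<sigma> P" using P(2) by (simp add: conj_component_def)
  show ?thesis
  proof
    assume "(lift 1 x, embed 3 y) \<in> (stack_rel [perm_diagram k \<sigma>, w, transp (perm_diagram k \<sigma>)])\<^sup>*"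
    then have "conj_retract \<sigma> (embed 3 y) \<in> P" using closed[OF _ P(1) x] retract[OF P(1)] by blast
    then show "y \<in> relabel \<sigma> ` P" using relabel_conj_retract_embed[OF sp, of y] by (metis imageI)
  next
    assume "y \<in> relabel \<sigma> ` P"
    then have "embed 3 y \<in> conj_component \<sigma> P" using embed_relabel_conj_component by blast
    then show "(lift 1 x, embed 3 y) \<in> (stack_rel [perm_diagram k \<sigma>, w, transp (perm_diagram k \<sigma>)])\<^sup>*"
      using trancl_into_rtrancl[OF connected[OF P(1) x]] by simp
  qed
qed

lemma sigma_dw_pidx:
  assumes sp: "\<sigma> permutes {1..k}" and w: "partition_on (verts k) w" and P: "P \<in> prop_blocks w"
  shows "sigma_dw (perm_diagram k \<sigma>) w (pidx w P) = pidx (relabel_diagram \<sigma> w) (relabel \<sigma> ` P)"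
proof -
  let ?d = "perm_diagram k \<sigma>" and ?w' = "relabel_diagram \<sigma> w"
  let ?R = "stack_rel [?d, w, transp ?d]"
  have pb: "bij_betw (pidx w) (prop_blocks w) {1..pn w}" by (rule pidx_bij[OF w])
  have Pw: "P \<in> w" using P by (simp add: prop_blocks_def)
  have fP: "relabel \<sigma> ` P \<in> prop_blocks ?w'" using P prop_blocks_relabel_diagram by blast
  let ?Pr = "\<lambda>j. \<exists>P'\<in>prop_blocks w. \<exists>Q\<in>prop_blocks ?w'. pidx w P' = pidx w P \<and> pidx ?w' Q = j \<and>
        (\<exists>x\<in>P'. \<exists>y\<in>Q. (lift 1 x, embed 3 y) \<in> ?R\<^sup>*)"
  have ex: "?Pr (pidx ?w' (relabel \<sigma> ` P))"
  proof -
    obtain x where x: "x \<in> P" using P by (auto simp: prop_blocks_def)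
    then have "(lift 1 x, embed 3 (relabel \<sigma> x)) \<in> ?R\<^sup>*"
      using conj_stack_path_iff[OF sp w Pw] by blast
    then show ?thesis using P fP x by blast
  qed
  have un: "j = pidx ?w' (relabel \<sigma> ` P)" if "?Pr j" for j
  proof -
    from that obtain P' Q x y where P': "P' \<in> prop_blocks w" and Q: "Q \<in> prop_blocks ?w'"
      and "pidx w P' = pidx w P" and j: "pidx ?w' Q = j"
      and x: "x \<in> P'" and y: "y \<in> Q" and r: "(lift 1 x, embed 3 y) \<in> ?R\<^sup>*" by blast
    then have "P' = P" using pb P by (auto simp: bij_betw_def dest: inj_onD)
    then have yP: "y \<in> relabel \<sigma> ` P" using conj_stack_path_iff[OF sp w Pw] x r by blast
    have "Q \<in> ?w'" "relabel \<sigma> ` P \<in> ?w'" using Q Pw by (auto simp: prop_blocks_def relabel_diagram_def)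
    then have "Q = relabel \<sigma> ` P"
      using partition_on_block_eq[OF partition_relabel_diagram[OF sp w] _ _ y yP] by blast
    then show ?thesis using j by simp
  qed
  have "pidx w P \<in> {1..pn w}" using pb P by (auto simp: bij_betw_def)
  then have "sigma_dw ?d w (pidx w P) = (THE j. ?Pr j)"
    by (simp add: sigma_dw_def conj_perm_diagram[OF sp w])
  also have "\<dots> = pidx ?w' (relabel \<sigma> ` P)" using ex un by (rule the_equality)
  finally show ?thesis .
qed

theorem sigma_dw_permutes:
  assumes sp: "\<sigma> permutes {1..k}" and w: "partition_on (verts k) w"
  shows "sigma_dw (perm_diagram k \<sigma>) w permutes {1..pn w}"
proof -
  let ?g = "sigma_dw (perm_diagram k \<sigma>) w" and ?w' = "relabel_diagram \<sigma> w"
  let ?h = "pidx ?w' \<circ> (\<lambda>B. relabel \<sigma> ` B) \<circ> inv_into (prop_blocks w) (pidx w)"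
  have pb: "bij_betw (pidx w) (prop_blocks w) {1..pn w}" by (rule pidx_bij[OF w])
  have "bij_betw (pidx ?w') (prop_blocks ?w') {1..pn w}"
    using pidx_bij[OF partition_relabel_diagram[OF sp w]] pn_relabel_diagram[OF sp] by simp
  moreover have "bij_betw (\<lambda>B. relabel \<sigma> ` B) (prop_blocks w) (prop_blocks ?w')"
    unfolding bij_betw_def prop_blocks_relabel_diagram
    using inj_on_image_sets[OF inj_relabel[OF sp]] by blast
  ultimately have "bij_betw ?h {1..pn w} {1..pn w}"
    using bij_betw_trans[OF bij_betw_trans[OF bij_betw_inv_into[OF pb]]] by (simp add: comp_assoc)
  moreover have "?g i = ?h i" if i: "i \<in> {1..pn w}" for i
  proof -
    define P where "P = inv_into (prop_blocks w) (pidx w) i"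
    have P: "P \<in> prop_blocks w" "pidx w P = i"
      using bij_betw_inv_into[OF pb] pb i
      by (auto simp: P_def bij_betw_def bij_betw_inv_into_right)
    then show ?thesis using sigma_dw_pidx[OF sp w P(1)] by (simp add: P_def)
  qed
  ultimately have "bij_betw ?g {1..pn w} {1..pn w}" using bij_betw_cong[of "{1..pn w}" ?g ?h] by blast
  moreover have "?g x = x" if "x \<notin> {1..pn w}" for x
    using that unfolding sigma_dw_def by (simp only: if_False)
  ultimately show ?thesis by (rule bij_imp_permutes)
qed

section \<open>Traces on fibred function spaces\<close>

text \<open>\<open>fibre_space S U\<close> models \<open>\<complex>S \<otimes> U\<close>; \<open>fibre_map S c g\<close> sends the fibre over \<open>w\<close> to the
  fibre over \<open>c w\<close> via \<open>g w\<close>.\<close>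

definition fibre_space :: "'w set \<Rightarrow> ('t \<Rightarrow> complex) set \<Rightarrow> ('w \<times> 't \<Rightarrow> complex) set" where
  "fibre_space S U = {F. (\<forall>w t. w \<notin> S \<longrightarrow> F (w, t) = 0) \<and> (\<forall>w\<in>S. (\<lambda>t. F (w, t)) \<in> U)}"

definition fibre_map :: "'w set \<Rightarrow> ('w \<Rightarrow> 'w) \<Rightarrow> ('w \<Rightarrow> ('t \<Rightarrow> complex) \<Rightarrow> ('t \<Rightarrow> complex)) \<Rightarrow>
    ('w \<times> 't \<Rightarrow> complex) \<Rightarrow> ('w \<times> 't \<Rightarrow> complex)" where
  "fibre_map S c g F = (\<lambda>(w', t). \<Sum>w\<in>{w \<in> S. c w = w'}. g w (\<lambda>s. F (w, s)) t)"

lemma fibre_spaceD: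
  "F \<in> fibre_space S U \<Longrightarrow> w \<in> S \<Longrightarrow> (\<lambda>t. F (w, t)) \<in> U"
  "F \<in> fibre_space S U \<Longrightarrow> w \<notin> S \<Longrightarrow> F (w, t) = 0"
  by (auto simp: fibre_space_def)

lemma fibre_space_subspace:
  assumes U: "fun_subspace U" shows "fun_subspace (fibre_space S U)"
  unfolding fun_subspace_def
proof (intro conjI ballI allI)
  show "(\<lambda>x. 0) \<in> fibre_space S U" using fun_subspace_zero[OF U] by (simp add: fibre_space_def)
  fix u v a b assume u: "u \<in> fibre_space S U" and v: "v \<in> fibre_space S U"
  have "(\<lambda>t. a * u (w, t) + b * v (w, t)) \<in> U" if "w \<in> S" for w
    using fun_subspaceD[OF U fibre_spaceD(1)[OF u that] fibre_spaceD(1)[OF v that]] .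
  then show "(\<lambda>x. a * u x + b * v x) \<in> fibre_space S U"
    using fibre_spaceD(2)[OF u] fibre_spaceD(2)[OF v] by (auto simp: fibre_space_def)
qed

lemma linear_map_on_fibre_map:
  assumes U: "fun_subspace U" and S: "finite S" and c: "c ` S \<subseteq> S"
    and g: "\<And>w. w \<in> S \<Longrightarrow> linear_map_on U (g w)"
  shows "linear_map_on (fibre_space S U) (fibre_map S c g)"
  unfolding linear_map_on_def
proof (intro conjI ballI allI)
  fix F assume F: "F \<in> fibre_space S U"
  have "(\<lambda>t. \<Sum>w\<in>{w \<in> S. c w = w'}. 1 * g w (\<lambda>s. F (w, s)) t) \<in> U" for w'
    using g F S by (intro fun_subspace_sum[OF U]) (auto simp: linear_map_on_def fibre_space_def)
  moreover have "fibre_map S c g F (w', t) = 0" if "w' \<notin> S" for w' t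
  proof -
    have e: "{w \<in> S. c w = w'} = {}" using c that by auto
    show ?thesis unfolding fibre_map_def prod.case e by simp
  qed
  ultimately show "fibre_map S c g F \<in> fibre_space S U"
    unfolding fibre_space_def by (simp add: fibre_map_def)
next
  fix u v a b assume u: "u \<in> fibre_space S U" and v: "v \<in> fibre_space S U"
  have "g w (\<lambda>s. a * u (w, s) + b * v (w, s)) = (\<lambda>t. a * g w (\<lambda>s. u (w, s)) t + b * g w (\<lambda>s. v (w, s)) t)"
    if "w \<in> S" for w
    using linear_map_onD[OF g[OF that] fibre_spaceD(1)[OF u that] fibre_spaceD(1)[OF v that]] .
  then show "fibre_map S c g (\<lambda>x. a * u x + b * v x) =
      (\<lambda>x. a * fibre_map S c g u x + b * fibre_map S c g v x)"
    by (auto simp: fibre_map_def sum_distrib_left sum.distrib fun_eq_iff intro!: sum.cong)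
qed

lemma fibre_space_expansion:
  assumes S: "finite S" and F: "coord_frame U I b q" and u: "u \<in> fibre_space S U"
  shows "u (w', t) = (\<Sum>w\<in>S. if w = w' then (\<Sum>j\<in>I. q j (\<lambda>t. u (w, t)) * b j t) else 0)"
proof (cases "w' \<in> S")
  case True
  then have "(\<lambda>t. u (w', t)) = (\<lambda>x. \<Sum>j\<in>I. q j (\<lambda>t. u (w', t)) * b j x)"
    using F fibre_spaceD(1)[OF u] unfolding coord_frame_def by blast
  then have "(\<Sum>j\<in>I. q j (\<lambda>t. u (w', t)) * b j t) = u (w', t)" by (rule fun_cong[symmetric])
  then show ?thesis using True S by (simp add: sum.delta')
qed (use fibre_spaceD(2)[OF u] S in \<open>simp add: sum.delta'\<close>)

lemma linear_functional_on_fibre: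
  assumes p: "linear_functional_on U p" and w: "w \<in> S"
  shows "linear_functional_on (fibre_space S U) (\<lambda>F. p (\<lambda>t. F (w, t)))"
  unfolding linear_functional_on_def
proof (intro ballI allI)
  fix u v a b assume "u \<in> fibre_space S U" "v \<in> fibre_space S U"
  with w have "(\<lambda>t. u (w, t)) \<in> U" "(\<lambda>t. v (w, t)) \<in> U" by (auto dest: fibre_spaceD(1))
  from linear_functional_onD[OF p this]
  show "p (\<lambda>t. a * u (w, t) + b * v (w, t)) = a * p (\<lambda>t. u (w, t)) + b * p (\<lambda>t. v (w, t))" .
qed

lemma coord_frame_fibre_space:
  assumes S: "finite S" and F: "coord_frame U I b q"
  shows "coord_frame (fibre_space S U) (S \<times> I)
    (\<lambda>(w, j) (w', t). if w' = w then b j t else 0) (\<lambda>(w, j) F. q j (\<lambda>t. F (w, t)))"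
proof -
  have sU: "fun_subspace U" and fI: "finite I" and bU: "\<forall>i\<in>I. b i \<in> U"
    and dl: "\<forall>i\<in>I. \<forall>j\<in>I. q i (b j) = (if i = j then 1 else 0)"
    and lq: "\<forall>i\<in>I. linear_functional_on U (q i)"
    using F unfolding coord_frame_def by auto
  show ?thesis unfolding coord_frame_def
  proof (intro conjI ballI)
    show "fun_subspace (fibre_space S U)" by (rule fibre_space_subspace[OF sU])
    show "finite (S \<times> I)" using S fI by simp
  next
    fix p assume p: "p \<in> S \<times> I"
    have "(\<lambda>t. if w' = w then b j t else 0) \<in> U" if "j \<in> I" for w w' j
      using bU fun_subspace_zero[OF sU] that by (cases "w' = w") auto
    then show "(case p of (w, j) \<Rightarrow> \<lambda>(w', t). if w' = w then b j t else 0) \<in> fibre_space S U"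
      using p by (auto simp: fibre_space_def)
  next
    fix u assume u: "u \<in> fibre_space S U"
    show "u = (\<lambda>x. \<Sum>p\<in>S \<times> I. (case p of (w, j) \<Rightarrow> \<lambda>F. q j (\<lambda>t. F (w, t))) u *
        (case p of (w, j) \<Rightarrow> \<lambda>(w', t). if w' = w then b j t else 0) x)"
    proof
      fix x :: "'a \<times> 'b"
      obtain w' t where x: "x = (w', t)" by fastforce
      show "u x = (\<Sum>p\<in>S \<times> I. (case p of (w, j) \<Rightarrow> \<lambda>F. q j (\<lambda>t. F (w, t))) u *
          (case p of (w, j) \<Rightarrow> \<lambda>(w', t). if w' = w then b j t else 0) x)"
        unfolding x sum.cartesian_product' fibre_space_expansion[OF S F u, of w' t]
        by (auto intro!: sum.cong)
    qed
  next
    fix p p' assume "p \<in> S \<times> I" "p' \<in> S \<times> I"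
    then obtain w j w' j' where p: "p = (w, j)" "j \<in> I" and p': "p' = (w', j')" "j' \<in> I" by blast
    show "(case p of (w, j) \<Rightarrow> \<lambda>F. q j (\<lambda>t. F (w, t)))
        (case p' of (w, j) \<Rightarrow> \<lambda>(w', t). if w' = w then b j t else 0) = (if p = p' then 1 else 0)"
      using dl linear_functional_on_zero[OF sU lq[rule_format]] p p' by (cases "w = w'") auto
  next
    fix p assume "p \<in> S \<times> I"
    then show "linear_functional_on (fibre_space S U) (case p of (w, j) \<Rightarrow> \<lambda>F. q j (\<lambda>t. F (w, t)))"
      using linear_functional_on_fibre[OF lq[rule_format]] by auto
  qed
qed

lemma trace_on_fibre_map:
  assumes S: "finite S" and c: "c ` S \<subseteq> S" and F: "coord_frame U I b q"
    and lin: "\<And>w. w \<in> S \<Longrightarrow> linear_map_on U (g w)"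
  shows "trace_on (fibre_space S U) (fibre_map S c g) = (\<Sum>w\<in>{w \<in> S. c w = w}. trace_on U (g w))"
proof -
  have sU: "fun_subspace U" and lq: "\<forall>i\<in>I. linear_functional_on U (q i)"
    using F unfolding coord_frame_def by auto
  have diag: "q j (\<lambda>t. fibre_map S c g (\<lambda>(w', t). if w' = w then b j t else 0) (w, t))
      = (if c w = w then q j (g w (b j)) else 0)" if "w \<in> S" "j \<in> I" for w j
  proof -
    have "(\<lambda>t. fibre_map S c g (\<lambda>(w', t). if w' = w then b j t else 0) (w, t))
        = (\<lambda>t. \<Sum>w0\<in>{w0 \<in> S. c w0 = w}. if w0 = w then g w (b j) t else 0)"
      using linear_map_on_zero[OF sU lin] by (auto simp: fibre_map_def intro!: sum.cong)
    also have "\<dots> = (if c w = w then g w (b j) else (\<lambda>t. 0))"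
      using S that by (auto simp: sum.delta')
    finally show ?thesis using linear_functional_on_zero[OF sU] lq that by auto
  qed
  have "trace_on (fibre_space S U) (fibre_map S c g)
      = (\<Sum>w\<in>S. \<Sum>j\<in>I. q j (\<lambda>t. fibre_map S c g (\<lambda>(w', t). if w' = w then b j t else 0) (w, t)))"
    using trace_on_coord_frame[OF coord_frame_fibre_space[OF S F]
        linear_map_on_fibre_map[of U S c g, OF sU S c lin]]
    by (simp add: sum.cartesian_product')
  also have "\<dots> = (\<Sum>w\<in>S. if c w = w then trace_on U (g w) else 0)"
    using diag trace_on_coord_frame[OF F lin] by (auto intro!: sum.cong)
  also have "\<dots> = (\<Sum>w\<in>{w \<in> S. c w = w}. trace_on U (g w))"
    by (simp add: sum.inter_filter S)
  finally show ?thesis .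
qed

section \<open>Characters at \<open>\<gamma>\<^sub>\<kappa>\<close>\<close>

lemma finite_sym_mdiagrams: "finite (sym_mdiagrams A k m)"
proof (rule finite_subset)
  show "sym_mdiagrams A k m \<subseteq> Pow (Pow (verts k))"
    using partition_onD1 by (fastforce simp: sym_mdiagrams_def diagrams_def)
qed (simp add: finite_verts)

lemma sym_mdiagrams_partition: "w \<in> sym_mdiagrams A k m \<Longrightarrow> partition_on (verts k) w"
  by (simp add: sym_mdiagrams_def diagrams_def)

lemma sym_mdiagrams_pn: "w \<in> sym_mdiagrams A k m \<Longrightarrow> pn w = m"
  by (simp add: sym_mdiagrams_def)

lemma sigma_dw_permutes_sym_mdiagrams:
  assumes "\<sigma> permutes {1..k}" "w \<in> sym_mdiagrams A k m"
  shows "sigma_dw (perm_diagram k \<sigma>) w permutes {1..m}"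
  using sigma_dw_permutes[OF assms(1) sym_mdiagrams_partition[OF assms(2)]] sym_mdiagrams_pn[OF assms(2)]
  by simp

lemma amod_eq_fibre_space: "amod A k lam = fibre_space (sym_mdiagrams A k (sum_list (tl lam))) (specht (tl lam))"
  by (simp add: amod_def fibre_space_def)

text \<open>Conjugating by a permutation diagram closes no loops, so the parameter \<open>n\<close> drops out.\<close>

lemma amod_act_perm_diagram:
  assumes sp: "\<sigma> permutes {1..k}" and dA: "perm_diagram k \<sigma> \<in> diagrams A k"
  shows "amod_act A n k lam (perm_diagram k \<sigma>) = fibre_map (sym_mdiagrams A k (sum_list (tl lam)))
    (relabel_diagram \<sigma>) (\<lambda>w. perm_act (sigma_dw (perm_diagram k \<sigma>) w))"
proof -
  let ?S = "sym_mdiagrams A k (sum_list (tl lam))" and ?d = "perm_diagram k \<sigma>"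
  have "{w \<in> ?S. pn (?d \<circ>\<^sub>d w \<circ>\<^sub>d transp ?d) = sum_list (tl lam) \<and> ?d \<circ>\<^sub>d w \<circ>\<^sub>d transp ?d = w'} =
      {w \<in> ?S. relabel_diagram \<sigma> w = w'}" for w'
    using conj_perm_diagram[OF sp sym_mdiagrams_partition]
      sym_mdiagrams_pn[OF relabel_diagram_sym_mdiagrams[OF sp dA]] by auto
  moreover have "of_nat n ^ ell [?d, w] = (1::complex)" if "w \<in> ?S" for w
    using perm_diagram_comp(2)[OF sp sym_mdiagrams_partition[OF that]] by simp
  ultimately show ?thesis
    unfolding amod_act_def fibre_map_def by (intro ext) (auto intro!: sum.cong)
qed

theorem chi_A_perm_diagram:
  assumes sp: "\<sigma> permutes {1..k}" and dA: "perm_diagram k \<sigma> \<in> diagrams A k"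
  shows "chi_A A n k lam (perm_diagram k \<sigma>) =
    (\<Sum>w\<in>{w \<in> sym_mdiagrams A k (sum_list (tl lam)). relabel_diagram \<sigma> w = w}.
       chi_S (tl lam) (sigma_dw (perm_diagram k \<sigma>) w))"
proof -
  obtain bs r where F: "coord_frame (specht (tl lam)) {..<r} bs (\<lambda>i u. coord bs r u i)"
    by (rule specht_coord_frame)
  have "relabel_diagram \<sigma> ` sym_mdiagrams A k (sum_list (tl lam)) \<subseteq> sym_mdiagrams A k (sum_list (tl lam))"
    using relabel_diagram_sym_mdiagrams[OF sp dA] by blast
  moreover have "linear_map_on (specht (tl lam)) (perm_act (sigma_dw (perm_diagram k \<sigma>) w))"
    if "w \<in> sym_mdiagrams A k (sum_list (tl lam))" for w
    using perm_act_linear_map[OF sigma_dw_permutes_sym_mdiagrams[OF sp that]] .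
  ultimately show ?thesis
    unfolding chi_A_def chi_S_def amod_eq_fibre_space amod_act_perm_diagram[OF sp dA]
    by (rule trace_on_fibre_map[OF finite_sym_mdiagrams _ F])
qed

lemma finite_partitions: "finite {\<mu>. partition_of m \<mu>}"
proof (rule finite_subset)
  show "{\<mu>. partition_of m \<mu>} \<subseteq> {xs. set xs \<subseteq> {..m} \<and> length xs \<le> m}"
  proof
    fix \<mu> assume "\<mu> \<in> {\<mu>. partition_of m \<mu>}"
    then have p: "sum_list \<mu> = m" "\<forall>x\<in>set \<mu>. 0 < x" by (auto simp: partition_of_def)
    have "length \<mu> \<le> sum_list \<mu>" using p(2) by (induction \<mu>) auto
    then show "\<mu> \<in> {xs. set xs \<subseteq> {..m} \<and> length xs \<le> m}"
      using member_le_sum_list[of _ \<mu>] p(1) by auto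
  qed
  show "finite {xs. set xs \<subseteq> {..m} \<and> length xs \<le> m}" by (rule finite_lists_length_le) simp
qed

definition cycle_partition :: "nat \<Rightarrow> (nat \<Rightarrow> nat) \<Rightarrow> nat list" where
  "cycle_partition m \<sigma> = (THE \<mu>. partition_of m \<mu> \<and> cycle_type \<sigma> m = mset \<mu>)"

lemma cycle_partition:
  assumes "\<sigma> permutes {1..m}"
  shows "partition_of m (cycle_partition m \<sigma>)" "cycle_type \<sigma> m = mset (cycle_partition m \<sigma>)"
proof -
  obtain \<mu> where "partition_of m \<mu>" "cycle_type \<sigma> m = mset \<mu>"
    by (rule cycle_type_partition[OF assms])
  then have "\<exists>!\<mu>. partition_of m \<mu> \<and> cycle_type \<sigma> m = mset \<mu>"
    using partition_of_mset_eq by (intro ex1I[of _ \<mu>]) auto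
  from theI'[OF this] show "partition_of m (cycle_partition m \<sigma>)" "cycle_type \<sigma> m = mset (cycle_partition m \<sigma>)"
    unfolding cycle_partition_def by blast+
qed

lemma cycle_partition_eq_iff:
  assumes "\<sigma> permutes {1..m}" "partition_of m \<mu>"
  shows "cycle_partition m \<sigma> = \<mu> \<longleftrightarrow> cycle_type \<sigma> m = mset \<mu>"
  using cycle_partition[OF assms(1)] partition_of_mset_eq[OF _ assms(2)] by auto

lemma chi_S_cycle_partition:
  assumes "\<sigma> permutes {1..sum_list \<nu>}"
  shows "chi_S \<nu> \<sigma> = chi_S \<nu> (gamma (cycle_partition (sum_list \<nu>) \<sigma>))"
proof -
  let ?\<gamma> = "gamma (cycle_partition (sum_list \<nu>) \<sigma>)"
  note ct = cycle_partition[OF assms]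
  obtain \<tau> where tp: "\<tau> permutes {1..sum_list \<nu>}" and eq: "\<sigma> = \<tau> \<circ> ?\<gamma> \<circ> inv \<tau>"
    by (rule permutes_conj_gamma[OF assms ct])
  have gp: "?\<gamma> permutes {1..sum_list \<nu>}" using gamma_permutes ct(1) by (metis partition_of_def)
  from eq have "chi_S \<nu> \<sigma> = chi_S \<nu> (\<tau> \<circ> ?\<gamma> \<circ> inv \<tau>)" by (rule arg_cong)
  also have "\<dots> = chi_S \<nu> ?\<gamma>" by (rule chi_S_conj[OF tp gp])
  finally show ?thesis .
qed

lemma sum_chi_S_by_cycle_type:
  assumes X: "finite X" and perm: "\<And>w. w \<in> X \<Longrightarrow> f w permutes {1..sum_list \<nu>}"
  shows "(\<Sum>w\<in>X. chi_S \<nu> (f w)) = (\<Sum>\<mu>\<in>{\<mu>. partition_of (sum_list \<nu>) \<mu>}.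
    of_nat (card {w \<in> X. cycle_type (f w) (sum_list \<nu>) = mset \<mu>}) * chi_S \<nu> (gamma \<mu>))"
proof -
  let ?m = "sum_list \<nu>" and ?ct = "\<lambda>w. cycle_partition (sum_list \<nu>) (f w)"
  have "(\<Sum>w\<in>X. chi_S \<nu> (f w)) = (\<Sum>w\<in>X. chi_S \<nu> (gamma (?ct w)))"
    using chi_S_cycle_partition[OF perm] by simp
  also have "\<dots> = (\<Sum>\<mu>\<in>{\<mu>. partition_of ?m \<mu>}. \<Sum>w\<in>{w \<in> X. ?ct w = \<mu>}. chi_S \<nu> (gamma (?ct w)))"
    by (rule sum.group[OF X finite_partitions, symmetric]) (use cycle_partition(1)[OF perm] in auto)
  also have "\<dots> = (\<Sum>\<mu>\<in>{\<mu>. partition_of ?m \<mu>}.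
      of_nat (card {w \<in> X. cycle_type (f w) ?m = mset \<mu>}) * chi_S \<nu> (gamma \<mu>))"
  proof (rule sum.cong[OF refl])
    fix \<mu> assume "\<mu> \<in> {\<mu>. partition_of ?m \<mu>}"
    then have "{w \<in> X. ?ct w = \<mu>} = {w \<in> X. cycle_type (f w) ?m = mset \<mu>}"
      using cycle_partition_eq_iff[OF perm] by auto
    moreover have "(\<Sum>w\<in>{w \<in> X. ?ct w = \<mu>}. chi_S \<nu> (gamma (?ct w))) =
        (\<Sum>w\<in>{w \<in> X. ?ct w = \<mu>}. chi_S \<nu> (gamma \<mu>))" by (rule sum.cong) auto
    ultimately show "(\<Sum>w\<in>{w \<in> X. ?ct w = \<mu>}. chi_S \<nu> (gamma (?ct w))) =
        of_nat (card {w \<in> X. cycle_type (f w) ?m = mset \<mu>}) * chi_S \<nu> (gamma \<mu>)" by simp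
  qed
  finally show ?thesis .
qed

theorem mainTheorem7:
  fixes A :: alg and n k m :: nat and lam \<kappa> :: "nat list"
  assumes "2 * k \<le> n"
    and "lam \<in> Lambda A n k"
    and "m = sum_list (tl lam)"
    and "partition_of k \<kappa>"
    and "perm_diagram k (gamma \<kappa>) \<in> diagrams A k"
  shows "chi_A A n k lam (perm_diagram k (gamma \<kappa>)) =
    (\<Sum>\<mu>\<in>{\<mu>. partition_of m \<mu>}.
       of_nat (card (F_set A k m \<mu> \<kappa>)) * chi_S (tl lam) (gamma \<mu>))"
proof -
  let ?d = "perm_diagram k (gamma \<kappa>)"
  let ?Fix = "{w \<in> sym_mdiagrams A k m. relabel_diagram (gamma \<kappa>) w = w}"
  have sp: "gamma \<kappa> permutes {1..k}" using gamma_permutes[of \<kappa>] assms(4) by (simp add: partition_of_def)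
  have F: "F_set A k m \<mu> \<kappa> = {w \<in> ?Fix. cycle_type (sigma_dw ?d w) m = mset \<mu>}" for \<mu>
    using conj_perm_diagram[OF sp sym_mdiagrams_partition] by (auto simp: F_set_def)
  have perm: "sigma_dw ?d w permutes {1..sum_list (tl lam)}" if "w \<in> ?Fix" for w
    using sigma_dw_permutes_sym_mdiagrams[OF sp, of w A m] that assms(3) by simp
  have "chi_A A n k lam ?d = (\<Sum>w\<in>?Fix. chi_S (tl lam) (sigma_dw ?d w))"
    using chi_A_perm_diagram[OF sp assms(5)] assms(3) by simp
  also have "\<dots> = (\<Sum>\<mu>\<in>{\<mu>. partition_of m \<mu>}.
      of_nat (card {w \<in> ?Fix. cycle_type (sigma_dw ?d w) m = mset \<mu>}) * chi_S (tl lam) (gamma \<mu>))"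
    using sum_chi_S_by_cycle_type[of ?Fix "sigma_dw ?d" "tl lam", OF _ perm] finite_sym_mdiagrams assms(3)
    by simp
  finally show ?thesis by (simp only: F)
qed

end
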